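(* Let $\mathbb{A}$ be a 2-category having the two-dimensional kernel diagram of a 1-cell $l$. Then: (1) $l$ is a co-Kleisli morphism if and only if $l$ has a left adjoint and $l$ is an effective op-faithful morphism; (2) $l$ is a Kleisli morphism if and only if $l$ has a right adjoint and $l$ is an effective op-faithful morphism.
   Context: A 2-category is a $\mathbf{Cat}$-enriched category; composition of 1-cells is juxtaposition, vertical composition of 2-cells is $\cdot$, horizontal composition is $\ast$, $\mathrm{id}_f$ is the identity 2-cell on $f$. $\mathbb{A}^{\mathrm{op}}$, $\mathbb{A}^{\mathrm{coop}}$ are obtained from $\mathbb{A}$ by reversing 1-cells, resp. both 1-cells and 2-cells. A 1-cell is an equivalence if it has a pseudo-inverse up to invertible 2-cells. Adjunctions (in $\mathbb{A}$) are given by unit and counit 2-cells satisfying the triangle identities. For a 1-cell $p:e\to b$ of a 2-category $\mathbb{B}$: an opcomma object of $p$ along itself is $b\uparrow_pb$ with $\delta^0,\delta^1:b\to b\uparrow_pb$, $\alpha:\delta^1p\Rightarrow\delta^0p$ such that for every $y$, $h\mapsto(h\delta^0,h\delta^1,\mathrm{id}_h\ast\alpha)$ is an isomorphism from $\mathbb{B}(b\uparrow_pb,y)$ onto the category of triples $(h_0,h_1:b\to y,\beta:h_1p\Rightarrow h_0p)$ with morphisms pairs $(\xi_0,\xi_1)$ with $(\xi_0\ast\mathrm{id}_p)\cdot\beta=\beta'\cdot(\xi_1\ast\mathrm{id}_p)$. A two-dimensional pushout of a span $f_0,f_1$ is $P$ with $q_0,q_1$, $q_0f_0=q_1f_1$,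 such that $k\mapsto(kq_0,kq_1)$ is an isomorphism from $\mathbb{B}(P,y)$ onto pairs $(k_0,k_1)$ with $k_0f_0=k_1f_1$ (morphisms pairs of 2-cells $(\xi_0,\xi_1)$ with $\xi_0\ast\mathrm{id}_{f_0}=\xi_1\ast\mathrm{id}_{f_1}$). $\mathbb{B}$ has the two-dimensional cokernel diagram of $p$ if it has $b\uparrow_pb$ and a two-dimensional pushout $b\uparrow_pb\uparrow_pb$ of $(\delta^0,\delta^1)$ with $D^0,D^2$, $D^2\delta^0=D^0\delta^1$; $D^1$ is the unique 1-cell with $D^1\delta^1=D^2\delta^1$, $D^1\delta^0=D^0\delta^0$, $\mathrm{id}_{D^1}\ast\alpha=(\mathrm{id}_{D^0}\ast\alpha)\cdot(\mathrm{id}_{D^2}\ast\alpha)$; $s^0$ is unique with $s^0\delta^0=s^0\delta^1=\mathrm{id}_b$, $\mathrm{id}_{s^0}\ast\alpha=\mathrm{id}_p$. $\mathrm{Desc}_p(y)$: pairs $(h:y\to b,\beta:\delta^1h\Rightarrow\delta^0h)$ with $(\mathrm{id}_{D^0}\ast\beta)\cdot(\mathrm{id}_{D^2}\ast\beta)=\mathrm{id}_{D^1}\ast\beta$, $\mathrm{id}_{s^0}\ast\beta=\mathrm{id}_h$, morphisms $\xi:h_1\Rightarrow h_0$ with $\beta_0\cdot(\mathrm{id}_{\delta^1}\ast\xi)=(\mathrm{id}_{\delta^0}\ast\xi)\cdot\beta_1$; a lax descent object is $L$, $d:L\to b$, $\Psi:\delta^1d\Rightarrow\delta^0d$ with $g\mapsto(dg,\Psi\ast\mathrm{id}_g)$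 an isomorphism $\mathbb{B}(y,L)\cong\mathrm{Desc}_p(y)$ for all $y$; $p^H$ is unique with $dp^H=p$, $\Psi\ast\mathrm{id}_{p^H}=\alpha$. $p$ is effective faithful in $\mathbb{B}$ if $\mathbb{B}$ has the two-dimensional cokernel diagram of $p$, a lax descent object of it, and $p^H$ is an equivalence. The codensity monad of $p$ is $(b,t,m,\eta)$ from a right Kan extension $(t,\gamma)$ of $p$ along $p$ (i.e. $\gamma:tp\Rightarrow p$ with $\beta\mapsto\gamma\cdot(\beta\ast\mathrm{id}_p)$ bijective from 2-cells $k\Rightarrow t$ to 2-cells $kp\Rightarrow p$), $m$ unique with $\gamma\cdot(m\ast\mathrm{id}_p)=\gamma\cdot(\mathrm{id}_t\ast\gamma)$, $\eta$ unique with $\gamma\cdot(\eta\ast\mathrm{id}_p)=\mathrm{id}_p$. An Eilenberg–Moore object is $b^{\mathsf{T}}$ with $u$, $\mu:tu\Rightarrow u$ such that $g\mapsto(ug,\mu\ast\mathrm{id}_g)$ is an isomorphism onto the category of pairs $(h,\beta:th\Rightarrow h)$ with $\beta\cdot(\mathrm{id}_t\ast\beta)=\beta\cdot(m\ast\mathrm{id}_h)$, $\beta\cdot(\eta\ast\mathrm{id}_h)=\mathrm{id}_h$ (morphisms $\xi$ with $\xi\cdot\beta_1=\beta_0\cdot(\mathrm{id}_t\ast\xi)$). $p$ is monadic in $\mathbb{B}$ if it has a codensity monad with an Eilenberg–Moore object and the unique $p^{\mathsf{T}}$ with $up^{\mathsf{T}}=p$, $\mu\ast\mathrm{id}_{p^{\mathsf{T}}}=\gamma$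 is an equivalence. Duals in $\mathbb{A}$: the two-dimensional kernel diagram of $l$ is its two-dimensional cokernel diagram in $\mathbb{A}^{\mathrm{op}}$; $l$ is effective op-faithful if it is effective faithful in $\mathbb{A}^{\mathrm{op}}$; $l$ is a Kleisli morphism if it is monadic in $\mathbb{A}^{\mathrm{op}}$, and a co-Kleisli morphism if it is monadic in $\mathbb{A}^{\mathrm{coop}}$. *)

theory Defs
  imports Main
begin

text \<open>A 2-category is given by a set of objects, 1-cells and 2-cells (of types 'o, 'a, 'c).
  comp1 g f is the juxtaposition g f (first f, then g); vcomp a b is a \<cdot> b (first b, then a);
  hcomp a b is a \<ast> b, where a is a 2-cell between 1-cells composed after those of b.\<close>

record ('o, 'a, 'c) twocat =
  Obj   :: "'o set"
  Arr   :: "'a set"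
  src1  :: "'a \<Rightarrow> 'o"
  tgt1  :: "'a \<Rightarrow> 'o"
  comp1 :: "'a \<Rightarrow> 'a \<Rightarrow> 'a"
  id1   :: "'o \<Rightarrow> 'a"
  Cell  :: "'c set"
  dom2  :: "'c \<Rightarrow> 'a"
  cod2  :: "'c \<Rightarrow> 'a"
  vcomp :: "'c \<Rightarrow> 'c \<Rightarrow> 'c"
  hcomp :: "'c \<Rightarrow> 'c \<Rightarrow> 'c"
  id2   :: "'a \<Rightarrow> 'c"

definition hom1 :: "('o,'a,'c) twocat \<Rightarrow> 'o \<Rightarrow> 'o \<Rightarrow> 'a set" where
  "hom1 B x y = {f \<in> Arr B. src1 B f = x \<and> tgt1 B f = y}"

definition hom2 :: "('o,'a,'c) twocat \<Rightarrow> 'a \<Rightarrow> 'a \<Rightarrow> 'c set" where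
  "hom2 B f g = {\<alpha> \<in> Cell B. dom2 B \<alpha> = f \<and> cod2 B \<alpha> = g}"

definition two_category :: "('o,'a,'c) twocat \<Rightarrow> bool" where
  "two_category B \<longleftrightarrow>
    (\<forall>f\<in>Arr B. src1 B f \<in> Obj B \<and> tgt1 B f \<in> Obj B) \<and>
    (\<forall>x\<in>Obj B. id1 B x \<in> hom1 B x x) \<and>
    (\<forall>f\<in>Arr B. \<forall>g\<in>Arr B. src1 B g = tgt1 B f \<longrightarrow>
        comp1 B g f \<in> hom1 B (src1 B f) (tgt1 B g)) \<and>
    (\<forall>f\<in>Arr B. \<forall>g\<in>Arr B. \<forall>h\<in>Arr B. src1 B h = tgt1 B g \<and> src1 B g = tgt1 B f \<longrightarrow>
        comp1 B h (comp1 B g f) = comp1 B (comp1 B h g) f) \<and>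
    (\<forall>f\<in>Arr B. comp1 B (id1 B (tgt1 B f)) f = f \<and> comp1 B f (id1 B (src1 B f)) = f) \<and>
    (\<forall>\<alpha>\<in>Cell B. dom2 B \<alpha> \<in> Arr B \<and> cod2 B \<alpha> \<in> Arr B \<and>
        src1 B (dom2 B \<alpha>) = src1 B (cod2 B \<alpha>) \<and> tgt1 B (dom2 B \<alpha>) = tgt1 B (cod2 B \<alpha>)) \<and>
    (\<forall>f\<in>Arr B. id2 B f \<in> hom2 B f f) \<and>
    (\<forall>\<alpha>\<in>Cell B. \<forall>\<beta>\<in>Cell B. cod2 B \<beta> = dom2 B \<alpha> \<longrightarrow>
        vcomp B \<alpha> \<beta> \<in> hom2 B (dom2 B \<beta>) (cod2 B \<alpha>)) \<and>
    (\<forall>\<alpha>\<in>Cell B. \<forall>\<beta>\<in>Cell B. \<forall>\<gamma>\<in>Cell B. cod2 B \<gamma> = dom2 B \<beta> \<and> cod2 B \<beta> = dom2 B \<alpha> \<longrightarrow>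
        vcomp B \<alpha> (vcomp B \<beta> \<gamma>) = vcomp B (vcomp B \<alpha> \<beta>) \<gamma>) \<and>
    (\<forall>\<alpha>\<in>Cell B. vcomp B (id2 B (cod2 B \<alpha>)) \<alpha> = \<alpha> \<and> vcomp B \<alpha> (id2 B (dom2 B \<alpha>)) = \<alpha>) \<and>
    (\<forall>\<alpha>\<in>Cell B. \<forall>\<beta>\<in>Cell B. src1 B (dom2 B \<alpha>) = tgt1 B (dom2 B \<beta>) \<longrightarrow>
        hcomp B \<alpha> \<beta> \<in> hom2 B (comp1 B (dom2 B \<alpha>) (dom2 B \<beta>)) (comp1 B (cod2 B \<alpha>) (cod2 B \<beta>))) \<and>
    (\<forall>\<alpha>\<in>Cell B. \<forall>\<beta>\<in>Cell B. \<forall>\<gamma>\<in>Cell B.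
        src1 B (dom2 B \<alpha>) = tgt1 B (dom2 B \<beta>) \<and> src1 B (dom2 B \<beta>) = tgt1 B (dom2 B \<gamma>) \<longrightarrow>
        hcomp B \<alpha> (hcomp B \<beta> \<gamma>) = hcomp B (hcomp B \<alpha> \<beta>) \<gamma>) \<and>
    (\<forall>\<alpha>\<in>Cell B. hcomp B (id2 B (id1 B (tgt1 B (dom2 B \<alpha>)))) \<alpha> = \<alpha> \<and>
        hcomp B \<alpha> (id2 B (id1 B (src1 B (dom2 B \<alpha>)))) = \<alpha>) \<and>
    (\<forall>f\<in>Arr B. \<forall>g\<in>Arr B. src1 B g = tgt1 B f \<longrightarrow>
        hcomp B (id2 B g) (id2 B f) = id2 B (comp1 B g f)) \<and>
    (\<forall>\<alpha>\<in>Cell B. \<forall>\<alpha>'\<in>Cell B. \<forall>\<beta>\<in>Cell B. \<forall>\<beta>'\<in>Cell B.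
        cod2 B \<alpha> = dom2 B \<alpha>' \<and> cod2 B \<beta> = dom2 B \<beta>' \<and> src1 B (dom2 B \<alpha>) = tgt1 B (dom2 B \<beta>) \<longrightarrow>
        hcomp B (vcomp B \<alpha>' \<alpha>) (vcomp B \<beta>' \<beta>) = vcomp B (hcomp B \<alpha>' \<beta>') (hcomp B \<alpha> \<beta>))"

definition op2 :: "('o,'a,'c) twocat \<Rightarrow> ('o,'a,'c) twocat" where
  "op2 B = B\<lparr>src1 := tgt1 B, tgt1 := src1 B, comp1 := (\<lambda>g f. comp1 B f g),
             hcomp := (\<lambda>\<alpha> \<beta>. hcomp B \<beta> \<alpha>)\<rparr>"

definition coop2 :: "('o,'a,'c) twocat \<Rightarrow> ('o,'a,'c) twocat" where
  "coop2 B = B\<lparr>src1 := tgt1 B, tgt1 := src1 B, comp1 := (\<lambda>g f. comp1 B f g),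
             hcomp := (\<lambda>\<alpha> \<beta>. hcomp B \<beta> \<alpha>),
             dom2 := cod2 B, cod2 := dom2 B, vcomp := (\<lambda>\<alpha> \<beta>. vcomp B \<beta> \<alpha>)\<rparr>"

definition invertible2 :: "('o,'a,'c) twocat \<Rightarrow> 'c \<Rightarrow> bool" where
  "invertible2 B \<alpha> \<longleftrightarrow> \<alpha> \<in> Cell B \<and>
     (\<exists>\<beta>\<in>hom2 B (cod2 B \<alpha>) (dom2 B \<alpha>).
        vcomp B \<alpha> \<beta> = id2 B (cod2 B \<alpha>) \<and> vcomp B \<beta> \<alpha> = id2 B (dom2 B \<alpha>))"

definition equivalence1 :: "('o,'a,'c) twocat \<Rightarrow> 'a \<Rightarrow> bool" where
  "equivalence1 B f \<longleftrightarrow> f \<in> Arr B \<and>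
     (\<exists>g\<in>hom1 B (tgt1 B f) (src1 B f).
        (\<exists>a\<in>hom2 B (comp1 B g f) (id1 B (src1 B f)). invertible2 B a) \<and>
        (\<exists>b\<in>hom2 B (comp1 B f g) (id1 B (tgt1 B f)). invertible2 B b))"

text \<open>adjunction B f g \<eta> \<epsilon>: f is left adjoint to g, with unit \<eta> and counit \<epsilon>.\<close>

definition adjunction :: "('o,'a,'c) twocat \<Rightarrow> 'a \<Rightarrow> 'a \<Rightarrow> 'c \<Rightarrow> 'c \<Rightarrow> bool" where
  "adjunction B f g \<eta> \<epsilon> \<longleftrightarrow> f \<in> Arr B \<and> g \<in> hom1 B (tgt1 B f) (src1 B f) \<and>
     \<eta> \<in> hom2 B (id1 B (src1 B f)) (comp1 B g f) \<and>
     \<epsilon> \<in> hom2 B (comp1 B f g) (id1 B (tgt1 B f)) \<and>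
     vcomp B (hcomp B \<epsilon> (id2 B f)) (hcomp B (id2 B f) \<eta>) = id2 B f \<and>
     vcomp B (hcomp B (id2 B g) \<epsilon>) (hcomp B \<eta> (id2 B g)) = id2 B g"

definition has_left_adjoint :: "('o,'a,'c) twocat \<Rightarrow> 'a \<Rightarrow> bool" where
  "has_left_adjoint B l \<longleftrightarrow> (\<exists>r \<eta> \<epsilon>. adjunction B r l \<eta> \<epsilon>)"

definition has_right_adjoint :: "('o,'a,'c) twocat \<Rightarrow> 'a \<Rightarrow> bool" where
  "has_right_adjoint B l \<longleftrightarrow> (\<exists>r \<eta> \<epsilon>. adjunction B l r \<eta> \<epsilon>)"

definition opcomma :: "('o,'a,'c) twocat \<Rightarrow> 'a \<Rightarrow> 'o \<Rightarrow> 'a \<Rightarrow> 'a \<Rightarrow> 'c \<Rightarrow> bool" where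
  "opcomma B p c d0 d1 \<alpha> \<longleftrightarrow>
     p \<in> Arr B \<and> c \<in> Obj B \<and> d0 \<in> hom1 B (tgt1 B p) c \<and> d1 \<in> hom1 B (tgt1 B p) c \<and>
     \<alpha> \<in> hom2 B (comp1 B d1 p) (comp1 B d0 p) \<and>
     (\<forall>y\<in>Obj B.
       (\<forall>h0\<in>hom1 B (tgt1 B p) y. \<forall>h1\<in>hom1 B (tgt1 B p) y.
          \<forall>\<beta>\<in>hom2 B (comp1 B h1 p) (comp1 B h0 p).
            \<exists>!h. h \<in> hom1 B c y \<and> comp1 B h d0 = h0 \<and> comp1 B h d1 = h1 \<and>
                 hcomp B (id2 B h) \<alpha> = \<beta>) \<and>
       (\<forall>h\<in>hom1 B c y. \<forall>h'\<in>hom1 B c y.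
          \<forall>\<xi>0\<in>hom2 B (comp1 B h d0) (comp1 B h' d0). \<forall>\<xi>1\<in>hom2 B (comp1 B h d1) (comp1 B h' d1).
            vcomp B (hcomp B \<xi>0 (id2 B p)) (hcomp B (id2 B h) \<alpha>) =
              vcomp B (hcomp B (id2 B h') \<alpha>) (hcomp B \<xi>1 (id2 B p)) \<longrightarrow>
            (\<exists>!\<xi>. \<xi> \<in> hom2 B h h' \<and> hcomp B \<xi> (id2 B d0) = \<xi>0 \<and> hcomp B \<xi> (id2 B d1) = \<xi>1)))"

definition pushout2 :: "('o,'a,'c) twocat \<Rightarrow> 'a \<Rightarrow> 'a \<Rightarrow> 'o \<Rightarrow> 'a \<Rightarrow> 'a \<Rightarrow> bool" where
  "pushout2 B f0 f1 P q0 q1 \<longleftrightarrow>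
     f0 \<in> Arr B \<and> f1 \<in> Arr B \<and> src1 B f0 = src1 B f1 \<and> P \<in> Obj B \<and>
     q0 \<in> hom1 B (tgt1 B f0) P \<and> q1 \<in> hom1 B (tgt1 B f1) P \<and>
     comp1 B q0 f0 = comp1 B q1 f1 \<and>
     (\<forall>y\<in>Obj B.
       (\<forall>k0\<in>hom1 B (tgt1 B f0) y. \<forall>k1\<in>hom1 B (tgt1 B f1) y.
          comp1 B k0 f0 = comp1 B k1 f1 \<longrightarrow>
          (\<exists>!k. k \<in> hom1 B P y \<and> comp1 B k q0 = k0 \<and> comp1 B k q1 = k1)) \<and>
       (\<forall>k\<in>hom1 B P y. \<forall>k'\<in>hom1 B P y.
          \<forall>\<xi>0\<in>hom2 B (comp1 B k q0) (comp1 B k' q0). \<forall>\<xi>1\<in>hom2 B (comp1 B k q1) (comp1 B k' q1).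
            hcomp B \<xi>0 (id2 B f0) = hcomp B \<xi>1 (id2 B f1) \<longrightarrow>
            (\<exists>!\<xi>. \<xi> \<in> hom2 B k k' \<and> hcomp B \<xi> (id2 B q0) = \<xi>0 \<and> hcomp B \<xi> (id2 B q1) = \<xi>1)))"

text \<open>The two-dimensional cokernel diagram of p: opcomma object, the 2-pushout
  b\<up>b\<up>b of (\<delta>0,\<delta>1) with D2 \<delta>0 = D0 \<delta>1, and the induced 1-cells D1 and s0
  (which are uniquely determined by the opcomma universal property).\<close>

definition cokernel_diagram :: "('o,'a,'c) twocat \<Rightarrow> 'a \<Rightarrow> 'o \<Rightarrow> 'a \<Rightarrow> 'a \<Rightarrow> 'c \<Rightarrow>
     'o \<Rightarrow> 'a \<Rightarrow> 'a \<Rightarrow> 'a \<Rightarrow> 'a \<Rightarrow> bool" where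
  "cokernel_diagram B p c d0 d1 \<alpha> P D0 D1 D2 s0 \<longleftrightarrow>
     opcomma B p c d0 d1 \<alpha> \<and> pushout2 B d0 d1 P D2 D0 \<and>
     D1 \<in> hom1 B c P \<and> comp1 B D1 d1 = comp1 B D2 d1 \<and> comp1 B D1 d0 = comp1 B D0 d0 \<and>
     hcomp B (id2 B D1) \<alpha> = vcomp B (hcomp B (id2 B D0) \<alpha>) (hcomp B (id2 B D2) \<alpha>) \<and>
     s0 \<in> hom1 B c (tgt1 B p) \<and> comp1 B s0 d0 = id1 B (tgt1 B p) \<and>
     comp1 B s0 d1 = id1 B (tgt1 B p) \<and> hcomp B (id2 B s0) \<alpha> = id2 B p"

definition has_cokernel_diagram :: "('o,'a,'c) twocat \<Rightarrow> 'a \<Rightarrow> bool" where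
  "has_cokernel_diagram B p \<longleftrightarrow> (\<exists>c d0 d1 \<alpha> P D0 D1 D2 s0. cokernel_diagram B p c d0 d1 \<alpha> P D0 D1 D2 s0)"

definition desc_datum :: "('o,'a,'c) twocat \<Rightarrow> 'a \<Rightarrow> 'a \<Rightarrow> 'a \<Rightarrow> 'a \<Rightarrow> 'a \<Rightarrow> 'a \<Rightarrow> 'a \<Rightarrow> 'c \<Rightarrow> bool" where
  "desc_datum B d0 d1 D0 D1 D2 s0 h \<beta> \<longleftrightarrow>
     \<beta> \<in> hom2 B (comp1 B d1 h) (comp1 B d0 h) \<and>
     vcomp B (hcomp B (id2 B D0) \<beta>) (hcomp B (id2 B D2) \<beta>) = hcomp B (id2 B D1) \<beta> \<and>
     hcomp B (id2 B s0) \<beta> = id2 B h"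

definition lax_descent :: "('o,'a,'c) twocat \<Rightarrow> 'a \<Rightarrow> 'a \<Rightarrow> 'a \<Rightarrow> 'a \<Rightarrow> 'a \<Rightarrow> 'a \<Rightarrow> 'a \<Rightarrow>
     'o \<Rightarrow> 'a \<Rightarrow> 'c \<Rightarrow> bool" where
  "lax_descent B p d0 d1 D0 D1 D2 s0 L d \<Psi> \<longleftrightarrow>
     L \<in> Obj B \<and> d \<in> hom1 B L (tgt1 B p) \<and> \<Psi> \<in> hom2 B (comp1 B d1 d) (comp1 B d0 d) \<and>
     (\<forall>y\<in>Obj B.
       (\<forall>h\<in>hom1 B y (tgt1 B p). \<forall>\<beta>. desc_datum B d0 d1 D0 D1 D2 s0 h \<beta> \<longrightarrow>
          (\<exists>!g. g \<in> hom1 B y L \<and> comp1 B d g = h \<and> hcomp B \<Psi> (id2 B g) = \<beta>)) \<and>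
       (\<forall>g\<in>hom1 B y L. \<forall>g'\<in>hom1 B y L. \<forall>\<xi>\<in>hom2 B (comp1 B d g) (comp1 B d g').
          vcomp B (hcomp B \<Psi> (id2 B g')) (hcomp B (id2 B d1) \<xi>) =
            vcomp B (hcomp B (id2 B d0) \<xi>) (hcomp B \<Psi> (id2 B g)) \<longrightarrow>
          (\<exists>!\<zeta>. \<zeta> \<in> hom2 B g g' \<and> hcomp B (id2 B d) \<zeta> = \<xi>)))"

definition effective_faithful :: "('o,'a,'c) twocat \<Rightarrow> 'a \<Rightarrow> bool" where
  "effective_faithful B p \<longleftrightarrow>
     (\<exists>c d0 d1 \<alpha> P D0 D1 D2 s0 L d \<Psi> pH.
        cokernel_diagram B p c d0 d1 \<alpha> P D0 D1 D2 s0 \<and>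
        lax_descent B p d0 d1 D0 D1 D2 s0 L d \<Psi> \<and>
        pH \<in> hom1 B (src1 B p) L \<and> comp1 B d pH = p \<and> hcomp B \<Psi> (id2 B pH) = \<alpha> \<and>
        equivalence1 B pH)"

definition right_kan :: "('o,'a,'c) twocat \<Rightarrow> 'a \<Rightarrow> 'a \<Rightarrow> 'c \<Rightarrow> bool" where
  "right_kan B p t \<gamma> \<longleftrightarrow> p \<in> Arr B \<and> t \<in> hom1 B (tgt1 B p) (tgt1 B p) \<and>
     \<gamma> \<in> hom2 B (comp1 B t p) p \<and>
     (\<forall>k\<in>hom1 B (tgt1 B p) (tgt1 B p).
        bij_betw (\<lambda>\<beta>. vcomp B \<gamma> (hcomp B \<beta> (id2 B p))) (hom2 B k t) (hom2 B (comp1 B k p) p))"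

definition em_object :: "('o,'a,'c) twocat \<Rightarrow> 'o \<Rightarrow> 'a \<Rightarrow> 'c \<Rightarrow> 'c \<Rightarrow> 'o \<Rightarrow> 'a \<Rightarrow> 'c \<Rightarrow> bool" where
  "em_object B b t m \<eta> bT u \<mu> \<longleftrightarrow>
     bT \<in> Obj B \<and> u \<in> hom1 B bT b \<and> \<mu> \<in> hom2 B (comp1 B t u) u \<and>
     (\<forall>y\<in>Obj B.
       (\<forall>h\<in>hom1 B y b. \<forall>\<beta>\<in>hom2 B (comp1 B t h) h.
          vcomp B \<beta> (hcomp B (id2 B t) \<beta>) = vcomp B \<beta> (hcomp B m (id2 B h)) \<and>
          vcomp B \<beta> (hcomp B \<eta> (id2 B h)) = id2 B h \<longrightarrow>
          (\<exists>!g. g \<in> hom1 B y bT \<and> comp1 B u g = h \<and> hcomp B \<mu> (id2 B g) = \<beta>)) \<and>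
       (\<forall>g\<in>hom1 B y bT. \<forall>g'\<in>hom1 B y bT. \<forall>\<xi>\<in>hom2 B (comp1 B u g) (comp1 B u g').
          vcomp B \<xi> (hcomp B \<mu> (id2 B g)) = vcomp B (hcomp B \<mu> (id2 B g')) (hcomp B (id2 B t) \<xi>) \<longrightarrow>
          (\<exists>!\<zeta>. \<zeta> \<in> hom2 B g g' \<and> hcomp B (id2 B u) \<zeta> = \<xi>)))"

definition monadic :: "('o,'a,'c) twocat \<Rightarrow> 'a \<Rightarrow> bool" where
  "monadic B p \<longleftrightarrow>
     (\<exists>t \<gamma> m \<eta> bT u \<mu> pT.
        right_kan B p t \<gamma> \<and>
        m \<in> hom2 B (comp1 B t t) t \<and>
        vcomp B \<gamma> (hcomp B m (id2 B p)) = vcomp B \<gamma> (hcomp B (id2 B t) \<gamma>) \<and>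
        \<eta> \<in> hom2 B (id1 B (tgt1 B p)) t \<and>
        vcomp B \<gamma> (hcomp B \<eta> (id2 B p)) = id2 B p \<and>
        em_object B (tgt1 B p) t m \<eta> bT u \<mu> \<and>
        pT \<in> hom1 B (src1 B p) bT \<and> comp1 B u pT = p \<and> hcomp B \<mu> (id2 B pT) = \<gamma> \<and>
        equivalence1 B pT)"

definition has_kernel_diagram :: "('o,'a,'c) twocat \<Rightarrow> 'a \<Rightarrow> bool" where
  "has_kernel_diagram A l \<longleftrightarrow> has_cokernel_diagram (op2 A) l"

definition effective_op_faithful :: "('o,'a,'c) twocat \<Rightarrow> 'a \<Rightarrow> bool" where
  "effective_op_faithful A l \<longleftrightarrow> effective_faithful (op2 A) l"

definition kleisli_morphism :: "('o,'a,'c) twocat \<Rightarrow> 'a \<Rightarrow> bool" where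
  "kleisli_morphism A l \<longleftrightarrow> monadic (op2 A) l"

definition cokleisli_morphism :: "('o,'a,'c) twocat \<Rightarrow> 'a \<Rightarrow> bool" where
  "cokleisli_morphism A l \<longleftrightarrow> monadic (coop2 A) l"

end

theory Submission
  imports Defs
begin

text \<open>Both parts are the dual forms, in \<A>^coop and \<A>^op, of one statement about a 1-cell p of a
  2-category with the two-dimensional cokernel diagram of p: p is monadic iff it has a left
  adjoint and is effective faithful. (A left adjoint in \<A>^coop is one in \<A>, and reversing
  2-cells preserves effective faithfulness, swapping the roles of \<delta>0 and \<delta>1.)

  If f \<stileturn> p, then pf with counit p\<epsilon> is the codensity monad t of p, and the mate
  k : \<delta>1 \<Rightarrow> \<delta>0 t of the opcomma 2-cell \<alpha> identifies descent data over b with t-algebras: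
  the cocycle condition becomes associativity and normalisation the unit law. Hence lax
  descent objects and Eilenberg-Moore objects of p are the same thing, with the same
  comparison 1-cell. Conversely, if p is monadic, its left adjoint is the free-algebra
  adjunction composed with an adjoint equivalence for the comparison p^T.\<close>

lemma ex1_conj_cong:
  assumes "\<exists>!x. A x \<and> B x \<and> C x" "\<And>x. A x \<Longrightarrow> B x \<Longrightarrow> C x \<longleftrightarrow> C' x"
  shows "\<exists>!x. A x \<and> B x \<and> C' x"
  using assms by blast

lemma opcomma_factor:
  assumes "opcomma B p c d0 d1 \<alpha>" "y \<in> Obj B" "h0 \<in> hom1 B (tgt1 B p) y" "h1 \<in> hom1 B (tgt1 B p) y"
    "\<beta> \<in> hom2 B (comp1 B h1 p) (comp1 B h0 p)"
  shows "\<exists>!h. h \<in> hom1 B c y \<and> comp1 B h d0 = h0 \<and> comp1 B h d1 = h1 \<and> hcomp B (id2 B h) \<alpha> = \<beta>"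
  using assms unfolding opcomma_def by blast

lemma opcomma_factor_cell:
  assumes "opcomma B p c d0 d1 \<alpha>" "y \<in> Obj B" "h \<in> hom1 B c y" "h' \<in> hom1 B c y"
    "\<xi>0 \<in> hom2 B (comp1 B h d0) (comp1 B h' d0)" "\<xi>1 \<in> hom2 B (comp1 B h d1) (comp1 B h' d1)"
    "vcomp B (hcomp B \<xi>0 (id2 B p)) (hcomp B (id2 B h) \<alpha>) = vcomp B (hcomp B (id2 B h') \<alpha>) (hcomp B \<xi>1 (id2 B p))"
  shows "\<exists>!\<xi>. \<xi> \<in> hom2 B h h' \<and> hcomp B \<xi> (id2 B d0) = \<xi>0 \<and> hcomp B \<xi> (id2 B d1) = \<xi>1"
  using assms unfolding opcomma_def by blast

lemma pushout2_factor:
  assumes "pushout2 B f0 f1 P q0 q1" "y \<in> Obj B" "k0 \<in> hom1 B (tgt1 B f0) y" "k1 \<in> hom1 B (tgt1 B f1) y"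
     "comp1 B k0 f0 = comp1 B k1 f1"
  shows "\<exists>!k. k \<in> hom1 B P y \<and> comp1 B k q0 = k0 \<and> comp1 B k q1 = k1"
  using assms unfolding pushout2_def by blast

lemma pushout2_factor_cell:
  assumes "pushout2 B f0 f1 P q0 q1" "y \<in> Obj B" "k \<in> hom1 B P y" "k' \<in> hom1 B P y"
    "\<xi>0 \<in> hom2 B (comp1 B k q0) (comp1 B k' q0)" "\<xi>1 \<in> hom2 B (comp1 B k q1) (comp1 B k' q1)"
    "hcomp B \<xi>0 (id2 B f0) = hcomp B \<xi>1 (id2 B f1)"
  shows "\<exists>!\<xi>. \<xi> \<in> hom2 B k k' \<and> hcomp B \<xi> (id2 B q0) = \<xi>0 \<and> hcomp B \<xi> (id2 B q1) = \<xi>1"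
  using assms unfolding pushout2_def by blast

lemma right_kan_cell_unique:
  assumes "right_kan B p t \<gamma>" "k \<in> hom1 B (tgt1 B p) (tgt1 B p)" "x \<in> hom2 B k t" "y \<in> hom2 B k t"
    "vcomp B \<gamma> (hcomp B x (id2 B p)) = vcomp B \<gamma> (hcomp B y (id2 B p))"
  shows "x = y"
proof -
  have "inj_on (\<lambda>\<beta>. vcomp B \<gamma> (hcomp B \<beta> (id2 B p))) (hom2 B k t)"
    using assms(1,2) bij_betw_imp_inj_on unfolding right_kan_def by blast
  from inj_onD[OF this assms(5,3,4)] show ?thesis .
qed

lemma right_kan_cell_exists:
  assumes "right_kan B p t \<gamma>" "k \<in> hom1 B (tgt1 B p) (tgt1 B p)" "s \<in> hom2 B (comp1 B k p) p"
  obtains x where "x \<in> hom2 B k t" "vcomp B \<gamma> (hcomp B x (id2 B p)) = s"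
proof -
  have "s \<in> (\<lambda>\<beta>. vcomp B \<gamma> (hcomp B \<beta> (id2 B p))) ` hom2 B k t"
    using assms bij_betw_imp_surj_on unfolding right_kan_def by blast
  then show ?thesis using that by blast
qed

lemma lax_descent_simps:
  assumes "lax_descent B p d0 d1 D0 D1 D2 s0 L d \<Psi>"
  shows "L \<in> Obj B" "d \<in> Arr B" "src1 B d = L" "tgt1 B d = tgt1 B p"
    "\<Psi> \<in> Cell B" "dom2 B \<Psi> = comp1 B d1 d" "cod2 B \<Psi> = comp1 B d0 d"
  using assms unfolding lax_descent_def hom1_def hom2_def by auto

lemma lax_descent_lift:
  assumes "lax_descent B p d0 d1 D0 D1 D2 s0 L d \<Psi>"
    "y \<in> Obj B" "h \<in> hom1 B y (tgt1 B p)" "desc_datum B d0 d1 D0 D1 D2 s0 h \<beta>"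
  shows "\<exists>!g. g \<in> hom1 B y L \<and> comp1 B d g = h \<and> hcomp B \<Psi> (id2 B g) = \<beta>"
  using assms unfolding lax_descent_def by blast

lemma lax_descent_lift_cell:
  assumes "lax_descent B p d0 d1 D0 D1 D2 s0 L d \<Psi>"
    "y \<in> Obj B" "g \<in> hom1 B y L" "g' \<in> hom1 B y L" "\<xi> \<in> hom2 B (comp1 B d g) (comp1 B d g')"
    "vcomp B (hcomp B \<Psi> (id2 B g')) (hcomp B (id2 B d1) \<xi>) =
     vcomp B (hcomp B (id2 B d0) \<xi>) (hcomp B \<Psi> (id2 B g))"
  shows "\<exists>!\<zeta>. \<zeta> \<in> hom2 B g g' \<and> hcomp B (id2 B d) \<zeta> = \<xi>"
  using assms unfolding lax_descent_def by blast

lemma em_object_simps: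
  assumes "em_object B b t m \<eta> L u \<mu>"
  shows "L \<in> Obj B" "u \<in> Arr B" "src1 B u = L" "tgt1 B u = b"
    "\<mu> \<in> Cell B" "dom2 B \<mu> = comp1 B t u" "cod2 B \<mu> = u"
  using assms unfolding em_object_def hom1_def hom2_def by auto

lemma em_object_lift:
  assumes "em_object B b t m \<eta> L u \<mu>" "y \<in> Obj B" "h \<in> hom1 B y b" "a \<in> hom2 B (comp1 B t h) h"
    "vcomp B a (hcomp B (id2 B t) a) = vcomp B a (hcomp B m (id2 B h))"
    "vcomp B a (hcomp B \<eta> (id2 B h)) = id2 B h"
  shows "\<exists>!g. g \<in> hom1 B y L \<and> comp1 B u g = h \<and> hcomp B \<mu> (id2 B g) = a"
  using assms unfolding em_object_def by blast

lemma em_object_lift_cell: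
  assumes "em_object B b t m \<eta> L u \<mu>"
    "y \<in> Obj B" "g \<in> hom1 B y L" "g' \<in> hom1 B y L" "\<xi> \<in> hom2 B (comp1 B u g) (comp1 B u g')"
    "vcomp B \<xi> (hcomp B \<mu> (id2 B g)) = vcomp B (hcomp B \<mu> (id2 B g')) (hcomp B (id2 B t) \<xi>)"
  shows "\<exists>!\<zeta>. \<zeta> \<in> hom2 B g g' \<and> hcomp B (id2 B u) \<zeta> = \<xi>"
  using assms unfolding em_object_def by blast

section \<open>Strict 2-categories\<close>

locale two_cat =
  fixes B :: "('o,'a,'c) twocat"
  assumes arr_ends: "\<forall>f\<in>Arr B. src1 B f \<in> Obj B \<and> tgt1 B f \<in> Obj B"
    and id1_hom: "\<forall>x\<in>Obj B. id1 B x \<in> hom1 B x x"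
    and comp1_hom: "\<forall>f\<in>Arr B. \<forall>g\<in>Arr B. src1 B g = tgt1 B f \<longrightarrow>
        comp1 B g f \<in> hom1 B (src1 B f) (tgt1 B g)"
    and comp1_assoc_ax: "\<forall>f\<in>Arr B. \<forall>g\<in>Arr B. \<forall>h\<in>Arr B. src1 B h = tgt1 B g \<and> src1 B g = tgt1 B f \<longrightarrow>
        comp1 B h (comp1 B g f) = comp1 B (comp1 B h g) f"
    and comp1_unit: "\<forall>f\<in>Arr B. comp1 B (id1 B (tgt1 B f)) f = f \<and> comp1 B f (id1 B (src1 B f)) = f"
    and cell_parallel: "\<forall>\<alpha>\<in>Cell B. dom2 B \<alpha> \<in> Arr B \<and> cod2 B \<alpha> \<in> Arr B \<and>
        src1 B (dom2 B \<alpha>) = src1 B (cod2 B \<alpha>) \<and> tgt1 B (dom2 B \<alpha>) = tgt1 B (cod2 B \<alpha>)"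
    and id2_hom: "\<forall>f\<in>Arr B. id2 B f \<in> hom2 B f f"
    and vcomp_hom: "\<forall>\<alpha>\<in>Cell B. \<forall>\<beta>\<in>Cell B. cod2 B \<beta> = dom2 B \<alpha> \<longrightarrow>
        vcomp B \<alpha> \<beta> \<in> hom2 B (dom2 B \<beta>) (cod2 B \<alpha>)"
    and vcomp_assoc_ax: "\<forall>\<alpha>\<in>Cell B. \<forall>\<beta>\<in>Cell B. \<forall>\<gamma>\<in>Cell B. cod2 B \<gamma> = dom2 B \<beta> \<and> cod2 B \<beta> = dom2 B \<alpha> \<longrightarrow>
        vcomp B \<alpha> (vcomp B \<beta> \<gamma>) = vcomp B (vcomp B \<alpha> \<beta>) \<gamma>"
    and vcomp_unit: "\<forall>\<alpha>\<in>Cell B. vcomp B (id2 B (cod2 B \<alpha>)) \<alpha> = \<alpha> \<and> vcomp B \<alpha> (id2 B (dom2 B \<alpha>)) = \<alpha>"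
    and hcomp_hom: "\<forall>\<alpha>\<in>Cell B. \<forall>\<beta>\<in>Cell B. src1 B (dom2 B \<alpha>) = tgt1 B (dom2 B \<beta>) \<longrightarrow>
        hcomp B \<alpha> \<beta> \<in> hom2 B (comp1 B (dom2 B \<alpha>) (dom2 B \<beta>)) (comp1 B (cod2 B \<alpha>) (cod2 B \<beta>))"
    and hcomp_assoc_ax: "\<forall>\<alpha>\<in>Cell B. \<forall>\<beta>\<in>Cell B. \<forall>\<gamma>\<in>Cell B.
        src1 B (dom2 B \<alpha>) = tgt1 B (dom2 B \<beta>) \<and> src1 B (dom2 B \<beta>) = tgt1 B (dom2 B \<gamma>) \<longrightarrow>
        hcomp B \<alpha> (hcomp B \<beta> \<gamma>) = hcomp B (hcomp B \<alpha> \<beta>) \<gamma>"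
    and hcomp_unit: "\<forall>\<alpha>\<in>Cell B. hcomp B (id2 B (id1 B (tgt1 B (dom2 B \<alpha>)))) \<alpha> = \<alpha> \<and>
        hcomp B \<alpha> (id2 B (id1 B (src1 B (dom2 B \<alpha>)))) = \<alpha>"
    and hcomp_id2_ax: "\<forall>f\<in>Arr B. \<forall>g\<in>Arr B. src1 B g = tgt1 B f \<longrightarrow>
        hcomp B (id2 B g) (id2 B f) = id2 B (comp1 B g f)"
    and interchange_ax: "\<forall>\<alpha>\<in>Cell B. \<forall>\<alpha>'\<in>Cell B. \<forall>\<beta>\<in>Cell B. \<forall>\<beta>'\<in>Cell B.
        cod2 B \<alpha> = dom2 B \<alpha>' \<and> cod2 B \<beta> = dom2 B \<beta>' \<and> src1 B (dom2 B \<alpha>) = tgt1 B (dom2 B \<beta>) \<longrightarrow>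
        hcomp B (vcomp B \<alpha>' \<alpha>) (vcomp B \<beta>' \<beta>) = vcomp B (hcomp B \<alpha>' \<beta>') (hcomp B \<alpha> \<beta>)"

lemma two_cat_iff_two_category: "two_cat B \<longleftrightarrow> two_category B"
  unfolding two_cat_def two_category_def by (simp only: conj_assoc)

context two_cat
begin

lemma hom1_iff: "f \<in> hom1 B x y \<longleftrightarrow> f \<in> Arr B \<and> src1 B f = x \<and> tgt1 B f = y"
  by (simp add: hom1_def)

lemma hom2_iff: "a \<in> hom2 B f g \<longleftrightarrow> a \<in> Cell B \<and> dom2 B a = f \<and> cod2 B a = g"
  by (simp add: hom2_def)

lemma obj_src[simp]: "f \<in> Arr B \<Longrightarrow> src1 B f \<in> Obj B"
  and obj_tgt[simp]: "f \<in> Arr B \<Longrightarrow> tgt1 B f \<in> Obj B"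
  using arr_ends by auto

lemma id1_simps[simp]:
  "x \<in> Obj B \<Longrightarrow> id1 B x \<in> Arr B"
  "x \<in> Obj B \<Longrightarrow> src1 B (id1 B x) = x"
  "x \<in> Obj B \<Longrightarrow> tgt1 B (id1 B x) = x"
  using id1_hom by (auto simp: hom1_iff)

lemma comp1_simps[simp]:
  assumes "f \<in> Arr B" "g \<in> Arr B" "src1 B g = tgt1 B f"
  shows "comp1 B g f \<in> Arr B" "src1 B (comp1 B g f) = src1 B f" "tgt1 B (comp1 B g f) = tgt1 B g"
  using comp1_hom assms by (auto simp: hom1_iff)

lemma comp1_assoc[simp]:
  assumes "f \<in> Arr B" "g \<in> Arr B" "h \<in> Arr B" "src1 B h = tgt1 B g" "src1 B g = tgt1 B f"
  shows "comp1 B h (comp1 B g f) = comp1 B (comp1 B h g) f"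
  using comp1_assoc_ax assms by blast

lemma comp1_id_left[simp]: "f \<in> Arr B \<Longrightarrow> x = tgt1 B f \<Longrightarrow> comp1 B (id1 B x) f = f"
  and comp1_id_right[simp]: "f \<in> Arr B \<Longrightarrow> x = src1 B f \<Longrightarrow> comp1 B f (id1 B x) = f"
  using comp1_unit by auto

lemma cell_simps[simp]:
  assumes "a \<in> Cell B"
  shows "dom2 B a \<in> Arr B" "cod2 B a \<in> Arr B"
    "src1 B (cod2 B a) = src1 B (dom2 B a)" "tgt1 B (cod2 B a) = tgt1 B (dom2 B a)"
  using cell_parallel assms by auto

lemma id2_simps[simp]:
  assumes "f \<in> Arr B"
  shows "id2 B f \<in> Cell B" "dom2 B (id2 B f) = f" "cod2 B (id2 B f) = f"
  using id2_hom assms by (auto simp: hom2_iff)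

lemma vcomp_simps[simp]:
  assumes "a \<in> Cell B" "b \<in> Cell B" "cod2 B b = dom2 B a"
  shows "vcomp B a b \<in> Cell B" "dom2 B (vcomp B a b) = dom2 B b" "cod2 B (vcomp B a b) = cod2 B a"
  using vcomp_hom assms by (auto simp: hom2_iff)

lemma vcomp_assoc[simp]:
  assumes "a \<in> Cell B" "b \<in> Cell B" "c \<in> Cell B" "cod2 B c = dom2 B b" "cod2 B b = dom2 B a"
  shows "vcomp B (vcomp B a b) c = vcomp B a (vcomp B b c)"
  using vcomp_assoc_ax assms by (metis (no_types))

lemma vcomp_id_left[simp]: "a \<in> Cell B \<Longrightarrow> f = cod2 B a \<Longrightarrow> vcomp B (id2 B f) a = a"
  and vcomp_id_right[simp]: "a \<in> Cell B \<Longrightarrow> f = dom2 B a \<Longrightarrow> vcomp B a (id2 B f) = a"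
  using vcomp_unit by auto

lemma hcomp_simps[simp]:
  assumes "a \<in> Cell B" "b \<in> Cell B" "src1 B (dom2 B a) = tgt1 B (dom2 B b)"
  shows "hcomp B a b \<in> Cell B" "dom2 B (hcomp B a b) = comp1 B (dom2 B a) (dom2 B b)"
    "cod2 B (hcomp B a b) = comp1 B (cod2 B a) (cod2 B b)"
  using hcomp_hom assms by (auto simp: hom2_iff)

lemma hcomp_assoc[simp]:
  assumes "a \<in> Cell B" "b \<in> Cell B" "c \<in> Cell B" "src1 B (dom2 B a) = tgt1 B (dom2 B b)"
     "src1 B (dom2 B b) = tgt1 B (dom2 B c)"
  shows "hcomp B a (hcomp B b c) = hcomp B (hcomp B a b) c"
  using hcomp_assoc_ax assms by blast

lemma hcomp_id_left[simp]: "a \<in> Cell B \<Longrightarrow> x = tgt1 B (dom2 B a) \<Longrightarrow> hcomp B (id2 B (id1 B x)) a = a"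
  and hcomp_id_right[simp]: "a \<in> Cell B \<Longrightarrow> x = src1 B (dom2 B a) \<Longrightarrow> hcomp B a (id2 B (id1 B x)) = a"
  using hcomp_unit by auto

lemma hcomp_id2[simp]: "f \<in> Arr B \<Longrightarrow> g \<in> Arr B \<Longrightarrow> src1 B g = tgt1 B f \<Longrightarrow>
   hcomp B (id2 B g) (id2 B f) = id2 B (comp1 B g f)"
  using hcomp_id2_ax by auto

lemma interchange:
  assumes "a \<in> Cell B" "a' \<in> Cell B" "b \<in> Cell B" "b' \<in> Cell B"
    "cod2 B a = dom2 B a'" "cod2 B b = dom2 B b'" "src1 B (dom2 B a) = tgt1 B (dom2 B b)"
  shows "hcomp B (vcomp B a' a) (vcomp B b' b) = vcomp B (hcomp B a' b') (hcomp B a b)"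
  using interchange_ax assms by blast

lemma whisker_right_comp1[simp]:
  assumes "a \<in> Cell B" "f \<in> Arr B" "g \<in> Arr B" "src1 B g = tgt1 B f" "src1 B (dom2 B a) = tgt1 B g"
  shows "hcomp B a (id2 B (comp1 B g f)) = hcomp B (hcomp B a (id2 B g)) (id2 B f)"
  using assms hcomp_assoc[of a "id2 B g" "id2 B f"] by simp

lemma whisker_left_vcomp[simp]:
  assumes "a \<in> Cell B" "b \<in> Cell B" "cod2 B b = dom2 B a" "f \<in> Arr B" "src1 B f = tgt1 B (dom2 B a)"
  shows "hcomp B (id2 B f) (vcomp B a b) = vcomp B (hcomp B (id2 B f) a) (hcomp B (id2 B f) b)"
  using assms interchange[of "id2 B f" "id2 B f" b a] cell_simps(4)[of b] by simp

lemma whisker_right_vcomp[simp]: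
  assumes "a \<in> Cell B" "b \<in> Cell B" "cod2 B b = dom2 B a" "f \<in> Arr B" "tgt1 B f = src1 B (dom2 B a)"
  shows "hcomp B (vcomp B a b) (id2 B f) = vcomp B (hcomp B a (id2 B f)) (hcomp B b (id2 B f))"
  using assms interchange[of b a "id2 B f" "id2 B f"] cell_simps(3)[of b] by simp

lemma whisker_exchange:
  assumes "a \<in> Cell B" "b \<in> Cell B" "src1 B (dom2 B a) = tgt1 B (dom2 B b)"
  shows "vcomp B (hcomp B a (id2 B (cod2 B b))) (hcomp B (id2 B (dom2 B a)) b) =
         vcomp B (hcomp B (id2 B (cod2 B a)) b) (hcomp B a (id2 B (dom2 B b)))"
  using assms interchange[of "id2 B (dom2 B a)" a b "id2 B (cod2 B b)"]
    interchange[of a "id2 B (cod2 B a)" "id2 B (dom2 B b)" b] by simp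

text \<open>The simp set nests 1-cell and horizontal composites to the left and vertical composites
  to the right; the following turn an equation between short composites into rewrite rules
  that also fire inside longer ones.\<close>

lemma comp1_reassoc:
  assumes "comp1 B g f = k" "f \<in> Arr B" "g \<in> Arr B" "X \<in> Arr B" "src1 B g = tgt1 B f" "src1 B X = tgt1 B g"
  shows "comp1 B (comp1 B X g) f = comp1 B X k"
  using assms by (simp flip: comp1_assoc)

lemma whisker_left_reassoc:
  assumes "hcomp B (id2 B g) a = b" "a \<in> Cell B" "g \<in> Arr B" "X \<in> Arr B"
    "src1 B g = tgt1 B (dom2 B a)" "src1 B X = tgt1 B g"
  shows "hcomp B (id2 B (comp1 B X g)) a = hcomp B (id2 B X) b"
  using assms hcomp_assoc[of "id2 B X" "id2 B g" a] by simp

lemma whisker_right_reassoc: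
  assumes "hcomp B a (id2 B g) = b" "a \<in> Cell B" "g \<in> Arr B" "X \<in> Arr B"
    "src1 B (dom2 B a) = tgt1 B g" "src1 B X = tgt1 B (dom2 B a)"
  shows "hcomp B (hcomp B (id2 B X) a) (id2 B g) = hcomp B (id2 B X) b"
  using assms hcomp_assoc[of "id2 B X" a "id2 B g"] by simp

lemma whisker_comp1_reassoc:
  assumes "comp1 B g f = k" "a \<in> Cell B" "f \<in> Arr B" "g \<in> Arr B"
    "src1 B g = tgt1 B f" "src1 B (dom2 B a) = tgt1 B g"
  shows "hcomp B (hcomp B a (id2 B g)) (id2 B f) = hcomp B a (id2 B k)"
  using assms hcomp_assoc[of a "id2 B g" "id2 B f"] by simp

lemma vcomp_reassoc:
  assumes "vcomp B a b = c" "a \<in> Cell B" "b \<in> Cell B" "z \<in> Cell B" "cod2 B b = dom2 B a" "cod2 B z = dom2 B b"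
  shows "vcomp B a (vcomp B b z) = vcomp B c z"
  using assms by (simp flip: vcomp_assoc)

lemma whisker_left_cancel:
  assumes "\<sigma> \<in> hom2 B (id1 B (src1 B X)) (comp1 B Y X)" "hcomp B \<sigma> (id2 B f) = id2 B f"
    "g1 \<in> hom2 B e f" "g2 \<in> hom2 B e f" "X \<in> Arr B" "Y \<in> Arr B" "src1 B Y = tgt1 B X"
    "tgt1 B f = src1 B X" "hcomp B (id2 B X) g1 = hcomp B (id2 B X) g2"
  shows "g1 = g2"
proof -
  have split: "g = vcomp B (hcomp B (id2 B (comp1 B Y X)) g) (hcomp B \<sigma> (id2 B e))"
    if "g \<in> hom2 B e f" for g
    using whisker_exchange[of \<sigma> g] assms(1,2,5-8) that cell_simps[of g] by (simp add: hom2_iff)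
  have "hcomp B (id2 B Y) (hcomp B (id2 B X) g1) = hcomp B (id2 B Y) (hcomp B (id2 B X) g2)"
    using assms(9) by simp
  then have "hcomp B (id2 B (comp1 B Y X)) g1 = hcomp B (id2 B (comp1 B Y X)) g2"
    using assms(3-8) cell_simps(4)[of g1] cell_simps(4)[of g2] by (simp add: hom2_iff)
  with split assms(3,4) show ?thesis by metis
qed

end

section \<open>Descent data and algebras\<close>

text \<open>Given a codensity monad (t, \<gamma>, m, \<eta>) of p and a 2-cell k : d1 \<Rightarrow> d0 t with
  d0\<gamma> \<cdot> kp = \<alpha>, descent data over b = tgt1 B p correspond to t-algebras. The opcomma
  object c induces r : c \<rightarrow> b from (1, t, \<gamma>), and \<beta> \<mapsto> r\<beta> is inverse to descent_cell.
  The cocycle condition becomes associativity through R : P \<rightarrow> b, induced by (tr, r), and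
  normalisation becomes the unit law.\<close>

locale descent_comparison = two_cat +
  fixes p c d0 d1 \<alpha> P D0 D1 D2 s0 t \<gamma> \<eta> m k
  assumes cokernel: "cokernel_diagram B p c d0 d1 \<alpha> P D0 D1 D2 s0"
    and kan: "right_kan B p t \<gamma>"
    and unit_hom: "\<eta> \<in> hom2 B (id1 B (tgt1 B p)) t"
    and unit_law: "vcomp B \<gamma> (hcomp B \<eta> (id2 B p)) = id2 B p"
    and mult_hom: "m \<in> hom2 B (comp1 B t t) t"
    and mult_law: "vcomp B \<gamma> (hcomp B m (id2 B p)) = vcomp B \<gamma> (hcomp B (id2 B t) \<gamma>)"
    and comparison_hom: "k \<in> hom2 B d1 (comp1 B d0 t)"
    and comparison_law: "vcomp B (hcomp B (id2 B d0) \<gamma>) (hcomp B k (id2 B p)) = \<alpha>"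
begin

lemma opcomma: "opcomma B p c d0 d1 \<alpha>" and pushout: "pushout2 B d0 d1 P D2 D0"
  using cokernel unfolding cokernel_diagram_def by auto

lemma data_simps[simp]:
  "p \<in> Arr B" "c \<in> Obj B" "d0 \<in> Arr B" "src1 B d0 = tgt1 B p" "tgt1 B d0 = c"
  "d1 \<in> Arr B" "src1 B d1 = tgt1 B p" "tgt1 B d1 = c"
  "\<alpha> \<in> Cell B" "dom2 B \<alpha> = comp1 B d1 p" "cod2 B \<alpha> = comp1 B d0 p"
  "P \<in> Obj B" "D2 \<in> Arr B" "src1 B D2 = c" "tgt1 B D2 = P"
  "D0 \<in> Arr B" "src1 B D0 = c" "tgt1 B D0 = P"
  "D1 \<in> Arr B" "src1 B D1 = c" "tgt1 B D1 = P"
  "s0 \<in> Arr B" "src1 B s0 = c" "tgt1 B s0 = tgt1 B p"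
  "t \<in> Arr B" "src1 B t = tgt1 B p" "tgt1 B t = tgt1 B p"
  "\<gamma> \<in> Cell B" "dom2 B \<gamma> = comp1 B t p" "cod2 B \<gamma> = p"
  "\<eta> \<in> Cell B" "dom2 B \<eta> = id1 B (tgt1 B p)" "cod2 B \<eta> = t"
  "m \<in> Cell B" "dom2 B m = comp1 B t t" "cod2 B m = t"
  "k \<in> Cell B" "dom2 B k = d1" "cod2 B k = comp1 B d0 t"
  using cokernel kan unit_hom mult_hom comparison_hom
  unfolding cokernel_diagram_def opcomma_def pushout2_def right_kan_def hom1_def hom2_def
  by auto

lemma cokernel_eqs[simp]:
  "comp1 B D2 d0 = comp1 B D0 d1"
  "comp1 B D1 d1 = comp1 B D2 d1" "comp1 B D1 d0 = comp1 B D0 d0"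
  "hcomp B (id2 B D1) \<alpha> = vcomp B (hcomp B (id2 B D0) \<alpha>) (hcomp B (id2 B D2) \<alpha>)"
  "comp1 B s0 d0 = id1 B (tgt1 B p)" "comp1 B s0 d1 = id1 B (tgt1 B p)"
  "hcomp B (id2 B s0) \<alpha> = id2 B p"
  using cokernel unfolding cokernel_diagram_def pushout2_def by auto

lemmas cokernel_eqs_reassoc[simp] =
  comp1_reassoc[OF cokernel_eqs(1)] comp1_reassoc[OF cokernel_eqs(2)] comp1_reassoc[OF cokernel_eqs(3)]
  comp1_reassoc[OF cokernel_eqs(5)] comp1_reassoc[OF cokernel_eqs(6)]
  whisker_comp1_reassoc[OF cokernel_eqs(1)] whisker_comp1_reassoc[OF cokernel_eqs(2)]
  whisker_comp1_reassoc[OF cokernel_eqs(3)] whisker_comp1_reassoc[OF cokernel_eqs(5)]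
  whisker_comp1_reassoc[OF cokernel_eqs(6)]
  whisker_left_reassoc[OF cokernel_eqs(4)] whisker_left_reassoc[OF cokernel_eqs(7)]

declare unit_law[simp] comparison_law[simp] mult_law[simp]

lemmas monad_laws_reassoc[simp] =
  vcomp_reassoc[OF unit_law] vcomp_reassoc[OF mult_law] vcomp_reassoc[OF comparison_law]

definition r where
  "r = (THE h. h \<in> hom1 B c (tgt1 B p) \<and> comp1 B h d0 = id1 B (tgt1 B p) \<and> comp1 B h d1 = t \<and>
     hcomp B (id2 B h) \<alpha> = \<gamma>)"

lemma r_simps[simp]: "r \<in> Arr B" "src1 B r = c" "tgt1 B r = tgt1 B p"
  "comp1 B r d0 = id1 B (tgt1 B p)" "comp1 B r d1 = t" "hcomp B (id2 B r) \<alpha> = \<gamma>"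
proof -
  have "r \<in> hom1 B c (tgt1 B p) \<and> comp1 B r d0 = id1 B (tgt1 B p) \<and> comp1 B r d1 = t \<and>
      hcomp B (id2 B r) \<alpha> = \<gamma>"
    unfolding r_def by (rule theI', rule opcomma_factor[OF opcomma]) (auto simp: hom1_iff hom2_iff)
  then show "r \<in> Arr B" "src1 B r = c" "tgt1 B r = tgt1 B p"
    "comp1 B r d0 = id1 B (tgt1 B p)" "comp1 B r d1 = t" "hcomp B (id2 B r) \<alpha> = \<gamma>"
    by (auto simp: hom1_iff)
qed

lemmas r_simps_reassoc[simp] = comp1_reassoc[OF r_simps(4)] comp1_reassoc[OF r_simps(5)]
  whisker_left_reassoc[OF r_simps(6)] whisker_comp1_reassoc[OF r_simps(4)]
  whisker_comp1_reassoc[OF r_simps(5)]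

definition \<kappa> where
  "\<kappa> = (THE x. x \<in> hom2 B (id1 B c) (comp1 B d0 r) \<and> hcomp B x (id2 B d0) = id2 B d0 \<and>
     hcomp B x (id2 B d1) = k)"

lemma \<kappa>_simps[simp]: "\<kappa> \<in> Cell B" "dom2 B \<kappa> = id1 B c" "cod2 B \<kappa> = comp1 B d0 r"
  "hcomp B \<kappa> (id2 B d0) = id2 B d0" "hcomp B \<kappa> (id2 B d1) = k"
proof -
  have "\<kappa> \<in> hom2 B (id1 B c) (comp1 B d0 r) \<and> hcomp B \<kappa> (id2 B d0) = id2 B d0 \<and>
      hcomp B \<kappa> (id2 B d1) = k"
    unfolding \<kappa>_def
    by (rule theI', rule opcomma_factor_cell[OF opcomma, of c "id1 B c" "comp1 B d0 r"])
      (auto simp: hom1_iff hom2_iff)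
  then show "\<kappa> \<in> Cell B" "dom2 B \<kappa> = id1 B c" "cod2 B \<kappa> = comp1 B d0 r"
    "hcomp B \<kappa> (id2 B d0) = id2 B d0" "hcomp B \<kappa> (id2 B d1) = k"
    by (auto simp: hom2_iff)
qed

lemmas \<kappa>_simps_reassoc[simp] = whisker_right_reassoc[OF \<kappa>_simps(4)] whisker_right_reassoc[OF \<kappa>_simps(5)]

definition \<theta> where
  "\<theta> = (THE x. x \<in> hom2 B s0 r \<and> hcomp B x (id2 B d0) = id2 B (id1 B (tgt1 B p)) \<and>
     hcomp B x (id2 B d1) = \<eta>)"

lemma \<theta>_simps[simp]: "\<theta> \<in> Cell B" "dom2 B \<theta> = s0" "cod2 B \<theta> = r"
  "hcomp B \<theta> (id2 B d0) = id2 B (id1 B (tgt1 B p))" "hcomp B \<theta> (id2 B d1) = \<eta>"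
proof -
  have "\<theta> \<in> hom2 B s0 r \<and> hcomp B \<theta> (id2 B d0) = id2 B (id1 B (tgt1 B p)) \<and> hcomp B \<theta> (id2 B d1) = \<eta>"
    unfolding \<theta>_def
    by (rule theI', rule opcomma_factor_cell[OF opcomma, of "tgt1 B p" s0 r]) (auto simp: hom1_iff hom2_iff)
  then show "\<theta> \<in> Cell B" "dom2 B \<theta> = s0" "cod2 B \<theta> = r"
    "hcomp B \<theta> (id2 B d0) = id2 B (id1 B (tgt1 B p))" "hcomp B \<theta> (id2 B d1) = \<eta>"
    by (auto simp: hom2_iff)
qed

lemmas \<theta>_simps_reassoc[simp] = whisker_right_reassoc[OF \<theta>_simps(4)] whisker_right_reassoc[OF \<theta>_simps(5)]

definition R where
  "R = (THE x. x \<in> hom1 B P (tgt1 B p) \<and> comp1 B x D2 = comp1 B t r \<and> comp1 B x D0 = r)"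

lemma R_simps[simp]: "R \<in> Arr B" "src1 B R = P" "tgt1 B R = tgt1 B p"
  "comp1 B R D2 = comp1 B t r" "comp1 B R D0 = r"
proof -
  have "R \<in> hom1 B P (tgt1 B p) \<and> comp1 B R D2 = comp1 B t r \<and> comp1 B R D0 = r"
    unfolding R_def by (rule theI', rule pushout2_factor[OF pushout]) (auto simp: hom1_iff)
  then show "R \<in> Arr B" "src1 B R = P" "tgt1 B R = tgt1 B p"
    "comp1 B R D2 = comp1 B t r" "comp1 B R D0 = r"
    by (auto simp: hom1_iff)
qed

lemmas R_simps_reassoc[simp] = comp1_reassoc[OF R_simps(4)] comp1_reassoc[OF R_simps(5)]
  whisker_comp1_reassoc[OF R_simps(4)] whisker_comp1_reassoc[OF R_simps(5)]

definition \<nu> where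
  "\<nu> = (THE x. x \<in> hom2 B (comp1 B R D1) r \<and> hcomp B x (id2 B d0) = id2 B (id1 B (tgt1 B p)) \<and>
     hcomp B x (id2 B d1) = m)"

lemma \<nu>_simps[simp]: "\<nu> \<in> Cell B" "dom2 B \<nu> = comp1 B R D1" "cod2 B \<nu> = r"
  "hcomp B \<nu> (id2 B d0) = id2 B (id1 B (tgt1 B p))" "hcomp B \<nu> (id2 B d1) = m"
proof -
  have "\<nu> \<in> hom2 B (comp1 B R D1) r \<and> hcomp B \<nu> (id2 B d0) = id2 B (id1 B (tgt1 B p)) \<and>
      hcomp B \<nu> (id2 B d1) = m"
    unfolding \<nu>_def
    by (rule theI', rule opcomma_factor_cell[OF opcomma, of "tgt1 B p" "comp1 B R D1" r])
      (auto simp: hom1_iff hom2_iff)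
  then show "\<nu> \<in> Cell B" "dom2 B \<nu> = comp1 B R D1" "cod2 B \<nu> = r"
    "hcomp B \<nu> (id2 B d0) = id2 B (id1 B (tgt1 B p))" "hcomp B \<nu> (id2 B d1) = m"
    by (auto simp: hom2_iff)
qed

lemmas \<nu>_simps_reassoc[simp] = whisker_right_reassoc[OF \<nu>_simps(4)] whisker_right_reassoc[OF \<nu>_simps(5)]

definition \<omega> where
  "\<omega> = (THE x. x \<in> hom2 B (id1 B P) (comp1 B (comp1 B D0 d0) R) \<and>
     hcomp B x (id2 B D2) = vcomp B (hcomp B (hcomp B (id2 B D0) k) (id2 B r)) (hcomp B (id2 B D2) \<kappa>) \<and>
     hcomp B x (id2 B D0) = hcomp B (id2 B D0) \<kappa>)"

lemma \<omega>_simps[simp]: "\<omega> \<in> Cell B" "dom2 B \<omega> = id1 B P" "cod2 B \<omega> = comp1 B (comp1 B D0 d0) R"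
  "hcomp B \<omega> (id2 B D2) = vcomp B (hcomp B (hcomp B (id2 B D0) k) (id2 B r)) (hcomp B (id2 B D2) \<kappa>)"
  "hcomp B \<omega> (id2 B D0) = hcomp B (id2 B D0) \<kappa>"
proof -
  have "\<omega> \<in> hom2 B (id1 B P) (comp1 B (comp1 B D0 d0) R) \<and>
      hcomp B \<omega> (id2 B D2) = vcomp B (hcomp B (hcomp B (id2 B D0) k) (id2 B r)) (hcomp B (id2 B D2) \<kappa>) \<and>
      hcomp B \<omega> (id2 B D0) = hcomp B (id2 B D0) \<kappa>"
    unfolding \<omega>_def
    by (rule theI', rule pushout2_factor_cell[OF pushout, of P "id1 B P" "comp1 B (comp1 B D0 d0) R"])
      (auto simp: hom1_iff hom2_iff)
  then show "\<omega> \<in> Cell B" "dom2 B \<omega> = id1 B P" "cod2 B \<omega> = comp1 B (comp1 B D0 d0) R"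
    "hcomp B \<omega> (id2 B D2) = vcomp B (hcomp B (hcomp B (id2 B D0) k) (id2 B r)) (hcomp B (id2 B D2) \<kappa>)"
    "hcomp B \<omega> (id2 B D0) = hcomp B (id2 B D0) \<kappa>"
    by (auto simp: hom2_iff)
qed

lemmas \<omega>_simps_reassoc[simp] = whisker_right_reassoc[OF \<omega>_simps(4)] whisker_right_reassoc[OF \<omega>_simps(5)]

lemma r_whisker_comparison[simp]: "hcomp B (id2 B r) k = id2 B t"
proof (rule right_kan_cell_unique[OF kan])
  have "\<gamma> = hcomp B (id2 B r) (vcomp B (hcomp B (id2 B d0) \<gamma>) (hcomp B k (id2 B p)))"
    by simp
  also have "\<dots> = vcomp B \<gamma> (hcomp B (hcomp B (id2 B r) k) (id2 B p))"
    by (simp del: comparison_law)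
  finally show "vcomp B \<gamma> (hcomp B (hcomp B (id2 B r) k) (id2 B p)) =
      vcomp B \<gamma> (hcomp B (id2 B t) (id2 B p))"
    by simp
qed (auto simp: hom1_iff hom2_iff)

lemmas r_whisker_comparison_reassoc[simp] = whisker_left_reassoc[OF r_whisker_comparison]

definition descent_cell where
  "descent_cell h a = vcomp B (hcomp B (id2 B d0) a) (hcomp B k (id2 B h))"

lemma descent_cell_hom:
  assumes "h \<in> Arr B" "tgt1 B h = tgt1 B p" "a \<in> hom2 B (comp1 B t h) h'"
  shows "descent_cell h a \<in> hom2 B (comp1 B d1 h) (comp1 B d0 h')"
  using assms unfolding descent_cell_def by (simp add: hom2_iff)

lemma r_whisker_descent_cell:
  assumes "h \<in> Arr B" "tgt1 B h = tgt1 B p" "a \<in> hom2 B (comp1 B t h) h'"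
  shows "hcomp B (id2 B r) (descent_cell h a) = a"
  using assms unfolding descent_cell_def by (simp add: hom2_iff)

lemma descent_cell_r_whisker:
  assumes "h \<in> Arr B" "tgt1 B h = tgt1 B p" "h' \<in> Arr B" "tgt1 B h' = tgt1 B p"
    "\<beta> \<in> hom2 B (comp1 B d1 h) (comp1 B d0 h')"
  shows "descent_cell h (hcomp B (id2 B r) \<beta>) = \<beta>"
  using whisker_exchange[of \<kappa> \<beta>] assms unfolding descent_cell_def by (simp add: hom2_iff)

lemma descent_cell_iff:
  assumes "h \<in> Arr B" "tgt1 B h = tgt1 B p" "h' \<in> Arr B" "tgt1 B h' = tgt1 B p"
    "\<beta> \<in> hom2 B (comp1 B d1 h) (comp1 B d0 h')" "a \<in> hom2 B (comp1 B t h) h'"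
  shows "\<beta> = descent_cell h a \<longleftrightarrow> hcomp B (id2 B r) \<beta> = a"
  using assms descent_cell_r_whisker r_whisker_descent_cell by metis

lemma r_whisker_cancel:
  assumes "h \<in> Arr B" "tgt1 B h = tgt1 B p" "h' \<in> Arr B" "tgt1 B h' = tgt1 B p"
    "\<beta> \<in> hom2 B (comp1 B d1 h) (comp1 B d0 h')" "\<beta>' \<in> hom2 B (comp1 B d1 h) (comp1 B d0 h')"
    "hcomp B (id2 B r) \<beta> = hcomp B (id2 B r) \<beta>'"
  shows "\<beta> = \<beta>'"
  using assms descent_cell_r_whisker by metis

lemma s0_whisker:
  assumes "h \<in> Arr B" "tgt1 B h = tgt1 B p" "h' \<in> Arr B" "tgt1 B h' = tgt1 B p"
    "\<beta> \<in> hom2 B (comp1 B d1 h) (comp1 B d0 h')"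
  shows "hcomp B (id2 B s0) \<beta> = vcomp B (hcomp B (id2 B r) \<beta>) (hcomp B \<eta> (id2 B h))"
  using whisker_exchange[of \<theta> \<beta>] assms by (simp add: hom2_iff)

lemma R_D1_whisker:
  assumes "h \<in> Arr B" "tgt1 B h = tgt1 B p" "h' \<in> Arr B" "tgt1 B h' = tgt1 B p"
    "\<beta> \<in> hom2 B (comp1 B d1 h) (comp1 B d0 h')"
  shows "hcomp B (id2 B (comp1 B R D1)) \<beta> = vcomp B (hcomp B (id2 B r) \<beta>) (hcomp B m (id2 B h))"
  using whisker_exchange[of \<nu> \<beta>] assms by (simp add: hom2_iff)

lemma R_whisker_cancel:
  assumes "h \<in> Arr B" "tgt1 B h = tgt1 B p"
    "g1 \<in> hom2 B (comp1 B (comp1 B D2 d1) h) (comp1 B (comp1 B D0 d0) h)"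
    "g2 \<in> hom2 B (comp1 B (comp1 B D2 d1) h) (comp1 B (comp1 B D0 d0) h)"
    "hcomp B (id2 B R) g1 = hcomp B (id2 B R) g2"
  shows "g1 = g2"
  using assms by (intro whisker_left_cancel[of \<omega> R "comp1 B D0 d0" "comp1 B (comp1 B D0 d0) h" g1])
    (auto simp: hom2_iff)

lemma algebra_if_descent_datum:
  assumes "h \<in> Arr B" "tgt1 B h = tgt1 B p" "desc_datum B d0 d1 D0 D1 D2 s0 h \<beta>"
  shows "hcomp B (id2 B r) \<beta> \<in> hom2 B (comp1 B t h) h"
    "vcomp B (hcomp B (id2 B r) \<beta>) (hcomp B (id2 B t) (hcomp B (id2 B r) \<beta>)) =
     vcomp B (hcomp B (id2 B r) \<beta>) (hcomp B m (id2 B h))"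
    "vcomp B (hcomp B (id2 B r) \<beta>) (hcomp B \<eta> (id2 B h)) = id2 B h"
proof -
  have \<beta>: "\<beta> \<in> hom2 B (comp1 B d1 h) (comp1 B d0 h)"
    and cocycle: "vcomp B (hcomp B (id2 B D0) \<beta>) (hcomp B (id2 B D2) \<beta>) = hcomp B (id2 B D1) \<beta>"
    and normal: "hcomp B (id2 B s0) \<beta> = id2 B h"
    using assms(3) unfolding desc_datum_def by auto
  show "hcomp B (id2 B r) \<beta> \<in> hom2 B (comp1 B t h) h"
    using \<beta> assms by (simp add: hom2_iff)
  show "vcomp B (hcomp B (id2 B r) \<beta>) (hcomp B \<eta> (id2 B h)) = id2 B h"
    using s0_whisker[OF assms(1,2,1,2) \<beta>] normal by simp
  have "vcomp B (hcomp B (id2 B r) \<beta>) (hcomp B (id2 B t) (hcomp B (id2 B r) \<beta>)) =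
      hcomp B (id2 B R) (vcomp B (hcomp B (id2 B D0) \<beta>) (hcomp B (id2 B D2) \<beta>))"
    using \<beta> assms by (simp add: hom2_iff)
  also have "\<dots> = hcomp B (id2 B R) (hcomp B (id2 B D1) \<beta>)"
    using cocycle by simp
  also have "\<dots> = vcomp B (hcomp B (id2 B r) \<beta>) (hcomp B m (id2 B h))"
    using R_D1_whisker[OF assms(1,2,1,2) \<beta>] \<beta> assms by (simp add: hom2_iff)
  finally show "vcomp B (hcomp B (id2 B r) \<beta>) (hcomp B (id2 B t) (hcomp B (id2 B r) \<beta>)) =
      vcomp B (hcomp B (id2 B r) \<beta>) (hcomp B m (id2 B h))" .
qed

lemma descent_datum_if_algebra:
  assumes "h \<in> Arr B" "tgt1 B h = tgt1 B p" "a \<in> hom2 B (comp1 B t h) h"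
    "vcomp B a (hcomp B (id2 B t) a) = vcomp B a (hcomp B m (id2 B h))"
    "vcomp B a (hcomp B \<eta> (id2 B h)) = id2 B h"
  shows "desc_datum B d0 d1 D0 D1 D2 s0 h (descent_cell h a)"
proof -
  define \<beta> where "\<beta> = descent_cell h a"
  have \<beta>: "\<beta> \<in> hom2 B (comp1 B d1 h) (comp1 B d0 h)"
    unfolding \<beta>_def using assms(1-3) by (rule descent_cell_hom)
  have r\<beta>: "hcomp B (id2 B r) \<beta> = a"
    unfolding \<beta>_def using assms(1-3) by (rule r_whisker_descent_cell)
  have normal: "hcomp B (id2 B s0) \<beta> = id2 B h"
    using s0_whisker[OF assms(1,2,1,2) \<beta>] r\<beta> assms(5) by simp
  have "hcomp B (id2 B R) (vcomp B (hcomp B (id2 B D0) \<beta>) (hcomp B (id2 B D2) \<beta>)) =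
      vcomp B (hcomp B (id2 B r) \<beta>) (hcomp B (id2 B t) (hcomp B (id2 B r) \<beta>))"
    using \<beta> assms by (simp add: hom2_iff)
  also have "\<dots> = vcomp B (hcomp B (id2 B r) \<beta>) (hcomp B m (id2 B h))"
    using r\<beta> assms(4) by simp
  also have "\<dots> = hcomp B (id2 B R) (hcomp B (id2 B D1) \<beta>)"
    using R_D1_whisker[OF assms(1,2,1,2) \<beta>] \<beta> assms by (simp add: hom2_iff)
  finally have whiskered: "hcomp B (id2 B R) (vcomp B (hcomp B (id2 B D0) \<beta>) (hcomp B (id2 B D2) \<beta>)) =
      hcomp B (id2 B R) (hcomp B (id2 B D1) \<beta>)" .
  have "vcomp B (hcomp B (id2 B D0) \<beta>) (hcomp B (id2 B D2) \<beta>)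
      \<in> hom2 B (comp1 B (comp1 B D2 d1) h) (comp1 B (comp1 B D0 d0) h)"
    and "hcomp B (id2 B D1) \<beta> \<in> hom2 B (comp1 B (comp1 B D2 d1) h) (comp1 B (comp1 B D0 d0) h)"
    using \<beta> assms by (simp_all add: hom2_iff)
  from R_whisker_cancel[OF assms(1,2) this whiskered]
  have "vcomp B (hcomp B (id2 B D0) \<beta>) (hcomp B (id2 B D2) \<beta>) = hcomp B (id2 B D1) \<beta>" .
  with \<beta> normal show ?thesis unfolding desc_datum_def \<beta>_def by auto
qed

lemma descent_morphism_iff:
  assumes "h \<in> Arr B" "tgt1 B h = tgt1 B p" "h' \<in> Arr B" "tgt1 B h' = tgt1 B p"
    "\<beta> \<in> hom2 B (comp1 B d1 h) (comp1 B d0 h)" "\<beta>' \<in> hom2 B (comp1 B d1 h') (comp1 B d0 h')"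
    "\<xi> \<in> hom2 B h h'"
  shows "vcomp B \<beta>' (hcomp B (id2 B d1) \<xi>) = vcomp B (hcomp B (id2 B d0) \<xi>) \<beta> \<longleftrightarrow>
    vcomp B (hcomp B (id2 B r) \<beta>') (hcomp B (id2 B t) \<xi>) = vcomp B \<xi> (hcomp B (id2 B r) \<beta>)"
proof -
  have hom: "vcomp B \<beta>' (hcomp B (id2 B d1) \<xi>) \<in> hom2 B (comp1 B d1 h) (comp1 B d0 h')"
    "vcomp B (hcomp B (id2 B d0) \<xi>) \<beta> \<in> hom2 B (comp1 B d1 h) (comp1 B d0 h')"
    using assms by (simp_all add: hom2_iff)
  have whiskered: "hcomp B (id2 B r) (vcomp B \<beta>' (hcomp B (id2 B d1) \<xi>)) =
      vcomp B (hcomp B (id2 B r) \<beta>') (hcomp B (id2 B t) \<xi>)"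
    "hcomp B (id2 B r) (vcomp B (hcomp B (id2 B d0) \<xi>) \<beta>) = vcomp B \<xi> (hcomp B (id2 B r) \<beta>)"
    using assms by (simp_all add: hom2_iff)
  show ?thesis
  proof
    assume "vcomp B \<beta>' (hcomp B (id2 B d1) \<xi>) = vcomp B (hcomp B (id2 B d0) \<xi>) \<beta>"
    then show "vcomp B (hcomp B (id2 B r) \<beta>') (hcomp B (id2 B t) \<xi>) = vcomp B \<xi> (hcomp B (id2 B r) \<beta>)"
      using whiskered by simp
  next
    assume "vcomp B (hcomp B (id2 B r) \<beta>') (hcomp B (id2 B t) \<xi>) = vcomp B \<xi> (hcomp B (id2 B r) \<beta>)"
    then show "vcomp B \<beta>' (hcomp B (id2 B d1) \<xi>) = vcomp B (hcomp B (id2 B d0) \<xi>) \<beta>"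
      using r_whisker_cancel[OF assms(1-4) hom] whiskered by simp
  qed
qed

lemma descent_cell_whisker_right:
  assumes "h \<in> Arr B" "tgt1 B h = tgt1 B p" "a \<in> hom2 B (comp1 B t h) h'" "g \<in> Arr B" "src1 B h = tgt1 B g"
  shows "hcomp B (descent_cell h a) (id2 B g) = descent_cell (comp1 B h g) (hcomp B a (id2 B g))"
  using assms cell_simps[of a] unfolding descent_cell_def by (simp add: hom2_iff)

context
  fixes L d \<Psi>
  assumes descent: "lax_descent B p d0 d1 D0 D1 D2 s0 L d \<Psi>"
begin

lemma descent_whisker:
  assumes "g \<in> hom1 B y L"
  shows "hcomp B (hcomp B (id2 B r) \<Psi>) (id2 B g) = hcomp B (id2 B r) (hcomp B \<Psi> (id2 B g))"
    "hcomp B \<Psi> (id2 B g) \<in> hom2 B (comp1 B d1 (comp1 B d g)) (comp1 B d0 (comp1 B d g))"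
    "comp1 B d g \<in> Arr B" "tgt1 B (comp1 B d g) = tgt1 B p"
  using assms lax_descent_simps[OF descent] by (simp_all add: hom1_iff hom2_iff)

lemma algebra_lift:
  assumes "y \<in> Obj B" "h \<in> hom1 B y (tgt1 B p)" "a \<in> hom2 B (comp1 B t h) h"
    "vcomp B a (hcomp B (id2 B t) a) = vcomp B a (hcomp B m (id2 B h))"
    "vcomp B a (hcomp B \<eta> (id2 B h)) = id2 B h"
  shows "\<exists>!g. g \<in> hom1 B y L \<and> comp1 B d g = h \<and> hcomp B (hcomp B (id2 B r) \<Psi>) (id2 B g) = a"
proof -
  have "desc_datum B d0 d1 D0 D1 D2 s0 h (descent_cell h a)"
    using assms by (intro descent_datum_if_algebra) (auto simp: hom1_iff)
  from lax_descent_lift[OF descent assms(1,2) this]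
  have "\<exists>!g. g \<in> hom1 B y L \<and> comp1 B d g = h \<and> hcomp B \<Psi> (id2 B g) = descent_cell h a" .
  moreover have "hcomp B \<Psi> (id2 B g) = descent_cell h a \<longleftrightarrow> hcomp B (hcomp B (id2 B r) \<Psi>) (id2 B g) = a"
    if "g \<in> hom1 B y L" "comp1 B d g = h" for g
    using descent_cell_iff[of h h "hcomp B \<Psi> (id2 B g)" a] descent_whisker[OF that(1)] that assms(2,3)
    by (simp add: hom1_iff)
  ultimately show ?thesis
    by (rule ex1_conj_cong)
qed

lemma algebra_morphism_lift:
  assumes "y \<in> Obj B" "g \<in> hom1 B y L" "g' \<in> hom1 B y L" "\<xi> \<in> hom2 B (comp1 B d g) (comp1 B d g')"
    "vcomp B \<xi> (hcomp B (hcomp B (id2 B r) \<Psi>) (id2 B g)) =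
     vcomp B (hcomp B (hcomp B (id2 B r) \<Psi>) (id2 B g')) (hcomp B (id2 B t) \<xi>)"
  shows "\<exists>!\<zeta>. \<zeta> \<in> hom2 B g g' \<and> hcomp B (id2 B d) \<zeta> = \<xi>"
proof (rule lax_descent_lift_cell[OF descent assms(1-4)])
  note g = descent_whisker[OF assms(2)] and g' = descent_whisker[OF assms(3)]
  from descent_morphism_iff[OF g(3,4) g'(3,4) g(2) g'(2) assms(4)] assms(5)
  show "vcomp B (hcomp B \<Psi> (id2 B g')) (hcomp B (id2 B d1) \<xi>) =
      vcomp B (hcomp B (id2 B d0) \<xi>) (hcomp B \<Psi> (id2 B g))"
    unfolding g(1) g'(1) by simp
qed

lemma em_object_if_lax_descent: "em_object B (tgt1 B p) t m \<eta> L d (hcomp B (id2 B r) \<Psi>)"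
  unfolding em_object_def
proof (intro conjI ballI impI)
  show "L \<in> Obj B" "d \<in> hom1 B L (tgt1 B p)" "hcomp B (id2 B r) \<Psi> \<in> hom2 B (comp1 B t d) d"
    using lax_descent_simps[OF descent] by (simp_all add: hom1_iff hom2_iff)
next
  fix y h a
  assume "y \<in> Obj B" "h \<in> hom1 B y (tgt1 B p)" "a \<in> hom2 B (comp1 B t h) h"
    and "vcomp B a (hcomp B (id2 B t) a) = vcomp B a (hcomp B m (id2 B h)) \<and>
      vcomp B a (hcomp B \<eta> (id2 B h)) = id2 B h"
  then show "\<exists>!g. g \<in> hom1 B y L \<and> comp1 B d g = h \<and> hcomp B (hcomp B (id2 B r) \<Psi>) (id2 B g) = a"
    by (intro algebra_lift) simp_all
qed (rule algebra_morphism_lift)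

end

context
  fixes L u \<mu>
  assumes em: "em_object B (tgt1 B p) t m \<eta> L u \<mu>"
begin

lemma em_whisker:
  assumes "g \<in> hom1 B y L"
  shows "hcomp B (descent_cell u \<mu>) (id2 B g) = descent_cell (comp1 B u g) (hcomp B \<mu> (id2 B g))"
    "hcomp B \<mu> (id2 B g) \<in> hom2 B (comp1 B t (comp1 B u g)) (comp1 B u g)"
    "comp1 B u g \<in> Arr B" "tgt1 B (comp1 B u g) = tgt1 B p"
  using assms em_object_simps[OF em] descent_cell_whisker_right[of u \<mu> u g]
  by (simp_all add: hom1_iff hom2_iff)

lemma descent_lift:
  assumes "y \<in> Obj B" "h \<in> hom1 B y (tgt1 B p)" "desc_datum B d0 d1 D0 D1 D2 s0 h \<beta>"
  shows "\<exists>!g. g \<in> hom1 B y L \<and> comp1 B u g = h \<and> hcomp B (descent_cell u \<mu>) (id2 B g) = \<beta>"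
proof -
  have h: "h \<in> Arr B" "tgt1 B h = tgt1 B p" using assms(2) by (auto simp: hom1_iff)
  have \<beta>: "\<beta> \<in> hom2 B (comp1 B d1 h) (comp1 B d0 h)"
    using assms(3) unfolding desc_datum_def by blast
  from em_object_lift[OF em assms(1,2) algebra_if_descent_datum[OF h assms(3)]]
  have "\<exists>!g. g \<in> hom1 B y L \<and> comp1 B u g = h \<and> hcomp B \<mu> (id2 B g) = hcomp B (id2 B r) \<beta>" .
  moreover have "hcomp B \<mu> (id2 B g) = hcomp B (id2 B r) \<beta> \<longleftrightarrow> hcomp B (descent_cell u \<mu>) (id2 B g) = \<beta>"
    if "g \<in> hom1 B y L" "comp1 B u g = h" for g
    using descent_cell_iff[of "comp1 B u g" "comp1 B u g" \<beta> "hcomp B \<mu> (id2 B g)"]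
      em_whisker[OF that(1)] \<beta> that(2) by auto
  ultimately show ?thesis
    by (rule ex1_conj_cong)
qed

lemma descent_morphism_lift:
  assumes "y \<in> Obj B" "g \<in> hom1 B y L" "g' \<in> hom1 B y L" "\<xi> \<in> hom2 B (comp1 B u g) (comp1 B u g')"
    "vcomp B (hcomp B (descent_cell u \<mu>) (id2 B g')) (hcomp B (id2 B d1) \<xi>) =
     vcomp B (hcomp B (id2 B d0) \<xi>) (hcomp B (descent_cell u \<mu>) (id2 B g))"
  shows "\<exists>!\<zeta>. \<zeta> \<in> hom2 B g g' \<and> hcomp B (id2 B u) \<zeta> = \<xi>"
proof (rule em_object_lift_cell[OF em assms(1-4)])
  note g = em_whisker[OF assms(2)] and g' = em_whisker[OF assms(3)]
  from descent_morphism_iff[OF g(3,4) g'(3,4) descent_cell_hom[OF g(3,4,2)] descent_cell_hom[OF g'(3,4,2)]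
      assms(4)] assms(5)
  show "vcomp B \<xi> (hcomp B \<mu> (id2 B g)) = vcomp B (hcomp B \<mu> (id2 B g')) (hcomp B (id2 B t) \<xi>)"
    unfolding g(1) g'(1) r_whisker_descent_cell[OF g(3,4,2)] r_whisker_descent_cell[OF g'(3,4,2)]
    by simp
qed

lemma lax_descent_if_em_object: "lax_descent B p d0 d1 D0 D1 D2 s0 L u (descent_cell u \<mu>)"
  unfolding lax_descent_def
proof (intro conjI ballI allI impI)
  show "L \<in> Obj B" "u \<in> hom1 B L (tgt1 B p)"
    "descent_cell u \<mu> \<in> hom2 B (comp1 B d1 u) (comp1 B d0 u)"
    using em_object_simps[OF em] descent_cell_hom[of u \<mu> u] by (simp_all add: hom1_iff hom2_iff)
qed (rule descent_lift descent_morphism_lift; assumption)+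

end

end

section \<open>Adjunctions\<close>

locale adjoint_pair = two_cat +
  fixes f g \<eta> \<epsilon>
  assumes adjunction: "adjunction B f g \<eta> \<epsilon>"
begin

lemma adjoint_simps[simp]: "f \<in> Arr B" "g \<in> Arr B" "src1 B f = tgt1 B g" "tgt1 B f = src1 B g"
  "\<eta> \<in> Cell B" "dom2 B \<eta> = id1 B (tgt1 B g)" "cod2 B \<eta> = comp1 B g f"
  "\<epsilon> \<in> Cell B" "dom2 B \<epsilon> = comp1 B f g" "cod2 B \<epsilon> = id1 B (src1 B g)"
  using adjunction unfolding adjunction_def hom1_def hom2_def by auto

lemma triangle_left[simp]: "vcomp B (hcomp B \<epsilon> (id2 B f)) (hcomp B (id2 B f) \<eta>) = id2 B f"
  and triangle_right[simp]: "vcomp B (hcomp B (id2 B g) \<epsilon>) (hcomp B \<eta> (id2 B g)) = id2 B g"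
  using adjunction unfolding adjunction_def by auto

lemma triangle_left_whiskered[simp]:
  assumes "X \<in> Arr B" "src1 B X = src1 B g"
  shows "vcomp B (hcomp B (hcomp B (id2 B X) \<epsilon>) (id2 B f)) (hcomp B (id2 B (comp1 B X f)) \<eta>) =
    id2 B (comp1 B X f)"
proof -
  have "hcomp B (id2 B X) (vcomp B (hcomp B \<epsilon> (id2 B f)) (hcomp B (id2 B f) \<eta>)) =
      vcomp B (hcomp B (hcomp B (id2 B X) \<epsilon>) (id2 B f)) (hcomp B (id2 B (comp1 B X f)) \<eta>)"
    using assms by (simp del: triangle_left)
  then show ?thesis using assms by simp
qed

lemma triangle_right_whiskered[simp]:
  assumes "X \<in> Arr B" "src1 B X = tgt1 B g"
  shows "vcomp B (hcomp B (id2 B (comp1 B X g)) \<epsilon>) (hcomp B (hcomp B (id2 B X) \<eta>) (id2 B g)) =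
    id2 B (comp1 B X g)"
proof -
  have "hcomp B (id2 B X) (vcomp B (hcomp B (id2 B g) \<epsilon>) (hcomp B \<eta> (id2 B g))) =
      vcomp B (hcomp B (id2 B (comp1 B X g)) \<epsilon>) (hcomp B (hcomp B (id2 B X) \<eta>) (id2 B g))"
    using assms by (simp del: triangle_right)
  then show ?thesis using assms by simp
qed

lemma triangle_left_whiskered_right[simp]:
  assumes "Y \<in> Arr B" "tgt1 B Y = src1 B f"
  shows "vcomp B (hcomp B (hcomp B \<epsilon> (id2 B f)) (id2 B Y)) (hcomp B (hcomp B (id2 B f) \<eta>) (id2 B Y)) =
    id2 B (comp1 B f Y)"
proof -
  have "hcomp B (vcomp B (hcomp B \<epsilon> (id2 B f)) (hcomp B (id2 B f) \<eta>)) (id2 B Y) =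
      vcomp B (hcomp B (hcomp B \<epsilon> (id2 B f)) (id2 B Y)) (hcomp B (hcomp B (id2 B f) \<eta>) (id2 B Y))"
    using assms by (simp del: triangle_left)
  then show ?thesis using assms by simp
qed

lemma triangle_right_whiskered_right[simp]:
  assumes "Y \<in> Arr B" "tgt1 B Y = src1 B g"
  shows "vcomp B (hcomp B (hcomp B (id2 B g) \<epsilon>) (id2 B Y)) (hcomp B (hcomp B \<eta> (id2 B g)) (id2 B Y)) =
    id2 B (comp1 B g Y)"
proof -
  have "hcomp B (vcomp B (hcomp B (id2 B g) \<epsilon>) (hcomp B \<eta> (id2 B g))) (id2 B Y) =
      vcomp B (hcomp B (hcomp B (id2 B g) \<epsilon>) (id2 B Y)) (hcomp B (hcomp B \<eta> (id2 B g)) (id2 B Y))"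
    using assms by (simp del: triangle_right)
  then show ?thesis using assms by simp
qed

lemmas triangles_reassoc[simp] = vcomp_reassoc[OF triangle_left] vcomp_reassoc[OF triangle_right]
  vcomp_reassoc[OF triangle_left_whiskered] vcomp_reassoc[OF triangle_right_whiskered]
  vcomp_reassoc[OF triangle_left_whiskered_right] vcomp_reassoc[OF triangle_right_whiskered_right]

lemma codensity_right_kan: "right_kan B g (comp1 B g f) (hcomp B (id2 B g) \<epsilon>)"
  unfolding right_kan_def
proof (intro conjI ballI)
  fix k assume k: "k \<in> hom1 B (tgt1 B g) (tgt1 B g)"
  have restore: "vcomp B (hcomp B (vcomp B (hcomp B (id2 B g) \<epsilon>) (hcomp B x (id2 B g))) (id2 B f))
      (hcomp B (id2 B k) \<eta>) = x" if "x \<in> hom2 B k (comp1 B g f)" for x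
  proof -
    have "vcomp B (hcomp B (hcomp B x (id2 B g)) (id2 B f)) (hcomp B (id2 B k) \<eta>) =
        vcomp B (hcomp B (id2 B (comp1 B g f)) \<eta>) x"
      using whisker_exchange[of x \<eta>] k that by (simp add: hom1_iff hom2_iff)
    then show ?thesis using k that by (simp add: hom1_iff hom2_iff)
  qed
  have transpose: "vcomp B (hcomp B (id2 B g) \<epsilon>)
      (hcomp B (vcomp B (hcomp B s (id2 B f)) (hcomp B (id2 B k) \<eta>)) (id2 B g)) = s"
    if "s \<in> hom2 B (comp1 B k g) g" for s
  proof -
    have exchange: "vcomp B (hcomp B (id2 B g) \<epsilon>) (hcomp B (hcomp B s (id2 B f)) (id2 B g)) =
        vcomp B s (hcomp B (id2 B (comp1 B k g)) \<epsilon>)"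
      using whisker_exchange[of s \<epsilon>] k that by (simp add: hom1_iff hom2_iff)
    show ?thesis using k that vcomp_reassoc[OF exchange] by (simp add: hom1_iff hom2_iff)
  qed
  show "bij_betw (\<lambda>\<beta>. vcomp B (hcomp B (id2 B g) \<epsilon>) (hcomp B \<beta> (id2 B g)))
      (hom2 B k (comp1 B g f)) (hom2 B (comp1 B k g) g)"
    by (rule bij_betw_byWitness[where f'="\<lambda>s. vcomp B (hcomp B s (id2 B f)) (hcomp B (id2 B k) \<eta>)"])
      (use k restore transpose in \<open>auto simp: hom1_iff hom2_iff\<close>)
qed (auto simp: hom1_iff hom2_iff)

lemma codensity_mult_law:
  "vcomp B (hcomp B (id2 B g) \<epsilon>) (hcomp B (hcomp B (hcomp B (id2 B g) \<epsilon>) (id2 B f)) (id2 B g)) =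
   vcomp B (hcomp B (id2 B g) \<epsilon>) (hcomp B (id2 B (comp1 B g f)) (hcomp B (id2 B g) \<epsilon>))"
proof -
  have "vcomp B \<epsilon> (hcomp B (hcomp B \<epsilon> (id2 B f)) (id2 B g)) = vcomp B \<epsilon> (hcomp B (id2 B (comp1 B f g)) \<epsilon>)"
    using whisker_exchange[of \<epsilon> \<epsilon>] by simp
  then have "hcomp B (id2 B g) (vcomp B \<epsilon> (hcomp B (hcomp B \<epsilon> (id2 B f)) (id2 B g))) =
      hcomp B (id2 B g) (vcomp B \<epsilon> (hcomp B (id2 B (comp1 B f g)) \<epsilon>))"
    by (rule arg_cong)
  then show ?thesis by simp
qed

lemma mate_exists:
  assumes "right_kan B g t \<gamma>" "d0 \<in> hom1 B (tgt1 B g) c" "d1 \<in> hom1 B (tgt1 B g) c"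
    "\<alpha> \<in> hom2 B (comp1 B d1 g) (comp1 B d0 g)"
  obtains k where "k \<in> hom2 B d1 (comp1 B d0 t)"
    "vcomp B (hcomp B (id2 B d0) \<gamma>) (hcomp B k (id2 B g)) = \<alpha>"
proof -
  have t: "t \<in> Arr B" "src1 B t = tgt1 B g" "tgt1 B t = tgt1 B g"
    and \<gamma>: "\<gamma> \<in> Cell B" "dom2 B \<gamma> = comp1 B t g" "cod2 B \<gamma> = g"
    and d: "d0 \<in> Arr B" "src1 B d0 = tgt1 B g" "tgt1 B d0 = c" "d1 \<in> Arr B" "src1 B d1 = tgt1 B g" "tgt1 B d1 = c"
    and \<alpha>: "\<alpha> \<in> Cell B" "dom2 B \<alpha> = comp1 B d1 g" "cod2 B \<alpha> = comp1 B d0 g"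
    using assms unfolding right_kan_def hom1_def hom2_def by auto
  note [simp] = t \<gamma> d \<alpha>
  obtain \<iota> where \<iota>: "\<iota> \<in> Cell B" "dom2 B \<iota> = comp1 B g f" "cod2 B \<iota> = t"
    and \<iota>_law: "vcomp B \<gamma> (hcomp B \<iota> (id2 B g)) = hcomp B (id2 B g) \<epsilon>"
    using right_kan_cell_exists[OF assms(1), of "comp1 B g f" "hcomp B (id2 B g) \<epsilon>"]
    by (auto simp: hom1_iff hom2_iff)
  note [simp] = \<iota>
  have \<iota>_law': "vcomp B (hcomp B (id2 B d0) \<gamma>) (hcomp B (hcomp B (id2 B d0) \<iota>) (id2 B g)) =
      hcomp B (id2 B (comp1 B d0 g)) \<epsilon>"
  proof -
    have "hcomp B (id2 B d0) (vcomp B \<gamma> (hcomp B \<iota> (id2 B g))) = hcomp B (id2 B d0) (hcomp B (id2 B g) \<epsilon>)"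
      by (simp only: \<iota>_law)
    then show ?thesis by simp
  qed
  have \<alpha>_natural: "vcomp B (hcomp B (id2 B (comp1 B d0 g)) \<epsilon>) (hcomp B (hcomp B \<alpha> (id2 B f)) (id2 B g)) =
      vcomp B \<alpha> (hcomp B (id2 B (comp1 B d1 g)) \<epsilon>)"
    using whisker_exchange[of \<alpha> \<epsilon>] by simp
  show ?thesis
  proof (rule that)
    let ?k = "vcomp B (hcomp B (id2 B d0) \<iota>) (vcomp B (hcomp B \<alpha> (id2 B f)) (hcomp B (id2 B d1) \<eta>))"
    show "?k \<in> hom2 B d1 (comp1 B d0 t)" by (simp add: hom2_iff)
    show "vcomp B (hcomp B (id2 B d0) \<gamma>) (hcomp B ?k (id2 B g)) = \<alpha>"
      using vcomp_reassoc[OF \<iota>_law'] vcomp_reassoc[OF \<alpha>_natural] by simp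
  qed
qed

lemma monadic_if_effective_faithful:
  assumes "effective_faithful B g"
  shows "monadic B g"
proof -
  obtain c d0 d1 \<alpha> P D0 D1 D2 s0 L d \<Psi> gL where
    cokernel: "cokernel_diagram B g c d0 d1 \<alpha> P D0 D1 D2 s0"
    and descent: "lax_descent B g d0 d1 D0 D1 D2 s0 L d \<Psi>"
    and gL: "gL \<in> hom1 B (src1 B g) L" "comp1 B d gL = g" "hcomp B \<Psi> (id2 B gL) = \<alpha>" "equivalence1 B gL"
    using assms unfolding effective_faithful_def by blast
  obtain k where k: "k \<in> hom2 B d1 (comp1 B d0 (comp1 B g f))"
    "vcomp B (hcomp B (id2 B d0) (hcomp B (id2 B g) \<epsilon>)) (hcomp B k (id2 B g)) = \<alpha>"
    using cokernel mate_exists[OF codensity_right_kan, of d0 c d1 \<alpha>]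
    unfolding cokernel_diagram_def opcomma_def by blast
  interpret descent_comparison B g c d0 d1 \<alpha> P D0 D1 D2 s0 "comp1 B g f" "hcomp B (id2 B g) \<epsilon>" \<eta>
    "hcomp B (hcomp B (id2 B g) \<epsilon>) (id2 B f)" k
    by unfold_locales
      (use cokernel codensity_right_kan codensity_mult_law k in \<open>simp_all add: hom2_iff\<close>)
  have "hcomp B (hcomp B (id2 B r) \<Psi>) (id2 B gL) = hcomp B (id2 B g) \<epsilon>"
    unfolding descent_whisker(1)[OF descent gL(1)] gL(3) by simp
  then show ?thesis
    unfolding monadic_def
    using codensity_right_kan codensity_mult_law em_object_if_lax_descent[OF descent] gL
    by (intro exI conjI) (simp_all add: hom2_iff)
qed

end

context two_cat
begin

text \<open>The counit of the inner adjunction slides past the unit of the outer one.\<close>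

lemma adjunction_comp:
  assumes fg: "adjunction B f g \<eta> \<epsilon>" and fg': "adjunction B f' g' \<eta>' \<epsilon>'" and "src1 B f' = tgt1 B f"
  shows "adjunction B (comp1 B f' f) (comp1 B g g')
    (vcomp B (hcomp B (hcomp B (id2 B g) \<eta>') (id2 B f)) \<eta>)
    (vcomp B \<epsilon>' (hcomp B (hcomp B (id2 B f') \<epsilon>) (id2 B g')))"
proof -
  interpret fg: adjoint_pair B f g \<eta> \<epsilon> by unfold_locales (rule fg)
  interpret fg': adjoint_pair B f' g' \<eta>' \<epsilon>' by unfold_locales (rule fg')
  have [simp]: "src1 B f' = tgt1 B f" "src1 B g = tgt1 B g'"
    using assms(3) by simp_all
  have "vcomp B (hcomp B (hcomp B \<epsilon> (id2 B g')) (id2 B f')) (hcomp B (id2 B (comp1 B f g)) \<eta>') =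
      vcomp B \<eta>' \<epsilon>"
    using whisker_exchange[of \<epsilon> \<eta>'] by simp
  then have "hcomp B (hcomp B (id2 B f') (vcomp B (hcomp B (hcomp B \<epsilon> (id2 B g')) (id2 B f'))
      (hcomp B (id2 B (comp1 B f g)) \<eta>'))) (id2 B f) =
      hcomp B (hcomp B (id2 B f') (vcomp B \<eta>' \<epsilon>)) (id2 B f)"
    by simp
  then have exchange_left: "vcomp B
      (hcomp B (hcomp B (hcomp B (hcomp B (id2 B f') \<epsilon>) (id2 B g')) (id2 B f')) (id2 B f))
      (hcomp B (hcomp B (id2 B (comp1 B (comp1 B f' f) g)) \<eta>') (id2 B f)) =
    vcomp B (hcomp B (hcomp B (id2 B f') \<eta>') (id2 B f)) (hcomp B (hcomp B (id2 B f') \<epsilon>) (id2 B f))"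
    by simp
  have "vcomp B (hcomp B (id2 B (comp1 B g' f')) \<epsilon>) (hcomp B \<eta>' (id2 B (comp1 B f g))) =
      vcomp B \<eta>' \<epsilon>"
    using whisker_exchange[of \<eta>' \<epsilon>] by simp
  then have "hcomp B (hcomp B (id2 B g) (vcomp B (hcomp B (id2 B (comp1 B g' f')) \<epsilon>)
      (hcomp B \<eta>' (id2 B (comp1 B f g))))) (id2 B g') =
      hcomp B (hcomp B (id2 B g) (vcomp B \<eta>' \<epsilon>)) (id2 B g')"
    by simp
  then have exchange_right: "vcomp B
      (hcomp B (hcomp B (id2 B (comp1 B (comp1 B g g') f')) \<epsilon>) (id2 B g'))
      (hcomp B (hcomp B (hcomp B (hcomp B (id2 B g) \<eta>') (id2 B f)) (id2 B g)) (id2 B g')) =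
    vcomp B (hcomp B (hcomp B (id2 B g) \<eta>') (id2 B g')) (hcomp B (hcomp B (id2 B g) \<epsilon>) (id2 B g'))"
    by simp
  show ?thesis
    unfolding adjunction_def
    using vcomp_reassoc[OF exchange_left] vcomp_reassoc[OF exchange_right]
    by (simp add: hom1_iff hom2_iff)
qed

end

section \<open>Adjoint equivalences\<close>

context two_cat
begin

lemma unit_counit_idempotent:
  assumes f: "f \<in> Arr B" and g: "g \<in> Arr B" "src1 B g = tgt1 B f" "tgt1 B g = src1 B f"
    and \<eta>: "\<eta> \<in> hom2 B (id1 B (src1 B f)) (comp1 B g f)"
    and \<epsilon>: "\<epsilon> \<in> hom2 B (comp1 B f g) (id1 B (tgt1 B f))"
    and triangle: "vcomp B (hcomp B \<epsilon> (id2 B f)) (hcomp B (id2 B f) \<eta>) = id2 B f"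
  shows "vcomp B (vcomp B (hcomp B (id2 B g) \<epsilon>) (hcomp B \<eta> (id2 B g)))
      (vcomp B (hcomp B (id2 B g) \<epsilon>) (hcomp B \<eta> (id2 B g))) =
    vcomp B (hcomp B (id2 B g) \<epsilon>) (hcomp B \<eta> (id2 B g))"
proof -
  note [simp] = f g \<eta>[unfolded hom2_iff] \<epsilon>[unfolded hom2_iff]
  have \<eta>_\<epsilon>: "vcomp B (hcomp B \<eta> (id2 B g)) (hcomp B (id2 B g) \<epsilon>) =
     vcomp B (hcomp B (id2 B (comp1 B (comp1 B g f) g)) \<epsilon>)
       (hcomp B (hcomp B (hcomp B \<eta> (id2 B g)) (id2 B f)) (id2 B g))"
    using whisker_exchange[of \<eta> "hcomp B (id2 B g) \<epsilon>"] by simp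
  have "vcomp B \<epsilon> (hcomp B (id2 B (comp1 B f g)) \<epsilon>) = vcomp B \<epsilon> (hcomp B (hcomp B \<epsilon> (id2 B f)) (id2 B g))"
    using whisker_exchange[of \<epsilon> \<epsilon>] by simp
  then have "hcomp B (id2 B g) (vcomp B \<epsilon> (hcomp B (id2 B (comp1 B f g)) \<epsilon>)) =
      hcomp B (id2 B g) (vcomp B \<epsilon> (hcomp B (hcomp B \<epsilon> (id2 B f)) (id2 B g)))"
    by (rule arg_cong)
  then have \<epsilon>_\<epsilon>: "vcomp B (hcomp B (id2 B g) \<epsilon>) (hcomp B (id2 B (comp1 B (comp1 B g f) g)) \<epsilon>) =
     vcomp B (hcomp B (id2 B g) \<epsilon>) (hcomp B (hcomp B (hcomp B (id2 B g) \<epsilon>) (id2 B f)) (id2 B g))"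
    by simp
  have "vcomp B (hcomp B (hcomp B \<eta> (id2 B g)) (id2 B f)) \<eta> = vcomp B (hcomp B (id2 B (comp1 B g f)) \<eta>) \<eta>"
    using whisker_exchange[of \<eta> \<eta>] by simp
  then have "hcomp B (vcomp B (hcomp B (hcomp B \<eta> (id2 B g)) (id2 B f)) \<eta>) (id2 B g) =
      hcomp B (vcomp B (hcomp B (id2 B (comp1 B g f)) \<eta>) \<eta>) (id2 B g)"
    by (rule arg_cong)
  then have \<eta>_\<eta>: "vcomp B (hcomp B (hcomp B (hcomp B \<eta> (id2 B g)) (id2 B f)) (id2 B g)) (hcomp B \<eta> (id2 B g)) =
     vcomp B (hcomp B (hcomp B (id2 B (comp1 B g f)) \<eta>) (id2 B g)) (hcomp B \<eta> (id2 B g))"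
    by simp
  have triangle_whiskered: "vcomp B (hcomp B (hcomp B (hcomp B (id2 B g) \<epsilon>) (id2 B f)) (id2 B g))
      (hcomp B (hcomp B (id2 B (comp1 B g f)) \<eta>) (id2 B g)) = id2 B (comp1 B (comp1 B g f) g)"
  proof -
    have "hcomp B (id2 B g) (hcomp B (vcomp B (hcomp B \<epsilon> (id2 B f)) (hcomp B (id2 B f) \<eta>)) (id2 B g)) =
        hcomp B (id2 B g) (hcomp B (id2 B f) (id2 B g))"
      by (simp only: triangle)
    then show ?thesis by simp
  qed
  show ?thesis
    using vcomp_reassoc[OF \<eta>_\<epsilon>] vcomp_reassoc[OF \<epsilon>_\<epsilon>] \<eta>_\<eta> vcomp_reassoc[OF triangle_whiskered]
    by simp
qed

end

locale equivalence_data = two_cat +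
  fixes f g w w' e e'
  assumes arr: "f \<in> Arr B" "g \<in> Arr B" "src1 B g = tgt1 B f" "tgt1 B g = src1 B f"
    and unit: "w \<in> hom2 B (id1 B (src1 B f)) (comp1 B g f)" "w' \<in> hom2 B (comp1 B g f) (id1 B (src1 B f))"
      "vcomp B w' w = id2 B (id1 B (src1 B f))" "vcomp B w w' = id2 B (comp1 B g f)"
    and counit: "e \<in> hom2 B (comp1 B f g) (id1 B (tgt1 B f))" "e' \<in> hom2 B (id1 B (tgt1 B f)) (comp1 B f g)"
      "vcomp B e e' = id2 B (id1 B (tgt1 B f))" "vcomp B e' e = id2 B (comp1 B f g)"
begin

lemma data_simps[simp]:
  "f \<in> Arr B" "g \<in> Arr B" "src1 B g = tgt1 B f" "tgt1 B g = src1 B f"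
  "w \<in> Cell B" "dom2 B w = id1 B (src1 B f)" "cod2 B w = comp1 B g f"
  "w' \<in> Cell B" "dom2 B w' = comp1 B g f" "cod2 B w' = id1 B (src1 B f)"
  "e \<in> Cell B" "dom2 B e = comp1 B f g" "cod2 B e = id1 B (tgt1 B f)"
  "e' \<in> Cell B" "dom2 B e' = id1 B (tgt1 B f)" "cod2 B e' = comp1 B f g"
  using arr unit counit by (auto simp: hom2_iff)

text \<open>The counit is corrected by conjugating with the unit, so that the first triangle law holds.\<close>

definition adjusted_counit where
  "adjusted_counit =
     vcomp B e (vcomp B (hcomp B (hcomp B (id2 B f) w') (id2 B g)) (hcomp B (hcomp B e' (id2 B f)) (id2 B g)))"

definition adjusted_counit_inv where
  "adjusted_counit_inv =
     vcomp B (hcomp B (hcomp B e (id2 B f)) (id2 B g)) (vcomp B (hcomp B (hcomp B (id2 B f) w) (id2 B g)) e')"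

lemma adjusted_counit_simps[simp]:
  "adjusted_counit \<in> Cell B" "dom2 B adjusted_counit = comp1 B f g"
  "cod2 B adjusted_counit = id1 B (tgt1 B f)"
  "adjusted_counit_inv \<in> Cell B" "dom2 B adjusted_counit_inv = id1 B (tgt1 B f)"
  "cod2 B adjusted_counit_inv = comp1 B f g"
  unfolding adjusted_counit_def adjusted_counit_inv_def by simp_all

lemma whiskered_inverses:
  "vcomp B (hcomp B (hcomp B e' (id2 B f)) (id2 B g)) (hcomp B (hcomp B e (id2 B f)) (id2 B g)) =
    id2 B (comp1 B (comp1 B f g) (comp1 B f g))" (is ?e'e)
  "vcomp B (hcomp B (hcomp B e (id2 B f)) (id2 B g)) (hcomp B (hcomp B e' (id2 B f)) (id2 B g)) =
    id2 B (comp1 B f g)" (is ?ee')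
  "vcomp B (hcomp B (hcomp B (id2 B f) w') (id2 B g)) (hcomp B (hcomp B (id2 B f) w) (id2 B g)) =
    id2 B (comp1 B f g)" (is ?w'w)
  "vcomp B (hcomp B (hcomp B (id2 B f) w) (id2 B g)) (hcomp B (hcomp B (id2 B f) w') (id2 B g)) =
    id2 B (comp1 B (comp1 B (comp1 B f g) f) g)" (is ?ww')
  "vcomp B (hcomp B e (id2 B f)) (hcomp B e' (id2 B f)) = id2 B f" (is ?ee'f)
proof -
  show ?e'e using arg_cong[OF counit(4), of "\<lambda>x. hcomp B x (id2 B (comp1 B f g))"]
    by (simp del: counit)
  show ?ee' using arg_cong[OF counit(3), of "\<lambda>x. hcomp B x (id2 B (comp1 B f g))"]
    by (simp del: counit)
  show ?w'w using arg_cong[OF unit(3), of "\<lambda>x. hcomp B (id2 B f) (hcomp B x (id2 B g))"]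
    by (simp del: unit)
  show ?ww' using arg_cong[OF unit(4), of "\<lambda>x. hcomp B (id2 B f) (hcomp B x (id2 B g))"]
    by (simp del: unit)
  show ?ee'f using arg_cong[OF counit(3), of "\<lambda>x. hcomp B x (id2 B f)"]
    by (simp del: counit)
qed

lemma adjusted_counit_inverse:
  "vcomp B adjusted_counit adjusted_counit_inv = id2 B (id1 B (tgt1 B f))"
  "vcomp B adjusted_counit_inv adjusted_counit = id2 B (comp1 B f g)"
  unfolding adjusted_counit_def adjusted_counit_inv_def
  using vcomp_reassoc[OF whiskered_inverses(1)] vcomp_reassoc[OF whiskered_inverses(3)]
    vcomp_reassoc[OF counit(4)] vcomp_reassoc[OF whiskered_inverses(4)] whiskered_inverses(2) counit(3)
  by simp_all

lemma triangle_left_adjusted: "vcomp B (hcomp B adjusted_counit (id2 B f)) (hcomp B (id2 B f) w) = id2 B f"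
proof -
  have e'_w: "vcomp B (hcomp B (hcomp B (hcomp B e' (id2 B f)) (id2 B g)) (id2 B f)) (hcomp B (id2 B f) w) =
      vcomp B (hcomp B (id2 B (comp1 B (comp1 B f g) f)) w) (hcomp B e' (id2 B f))"
    using whisker_exchange[of e' "hcomp B (id2 B f) w"] by simp
  have "vcomp B (hcomp B (hcomp B w' (id2 B g)) (id2 B f)) (hcomp B (id2 B (comp1 B g f)) w) = id2 B (comp1 B g f)"
    using whisker_exchange[of w' w] unit by simp
  then have "hcomp B (id2 B f) (vcomp B (hcomp B (hcomp B w' (id2 B g)) (id2 B f))
      (hcomp B (id2 B (comp1 B g f)) w)) = id2 B (comp1 B (comp1 B f g) f)"
    by simp
  then have w'_w: "vcomp B (hcomp B (hcomp B (hcomp B (id2 B f) w') (id2 B g)) (id2 B f))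
      (hcomp B (id2 B (comp1 B (comp1 B f g) f)) w) = id2 B (comp1 B (comp1 B f g) f)"
    by simp
  show ?thesis
    unfolding adjusted_counit_def using e'_w vcomp_reassoc[OF w'_w] whiskered_inverses(5) by simp
qed

lemma triangle_right_adjusted: "vcomp B (hcomp B (id2 B g) adjusted_counit) (hcomp B w (id2 B g)) = id2 B g"
proof -
  define T where "T = vcomp B (hcomp B (id2 B g) adjusted_counit) (hcomp B w (id2 B g))"
  define T' where "T' = vcomp B (hcomp B w' (id2 B g)) (hcomp B (id2 B g) adjusted_counit_inv)"
  have T: "T \<in> Cell B" "dom2 B T = g" "cod2 B T = g" and T': "T' \<in> Cell B" "dom2 B T' = g" "cod2 B T' = g"
    unfolding T_def T'_def by simp_all
  \<comment> \<open>T is idempotent and has a left inverse, so it is the identity.\<close>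
  have idempotent: "vcomp B T T = T"
    unfolding T_def using triangle_left_adjusted
    by (intro unit_counit_idempotent) (simp_all add: hom2_iff)
  have "vcomp B (hcomp B (id2 B g) adjusted_counit_inv) (hcomp B (id2 B g) adjusted_counit) =
      id2 B (comp1 B g (comp1 B f g))"
    and "vcomp B (hcomp B w' (id2 B g)) (hcomp B w (id2 B g)) = id2 B g"
    using whisker_left_vcomp[of adjusted_counit_inv adjusted_counit g]
      whisker_right_vcomp[of w' w g] adjusted_counit_inverse(2) unit(3)
    by simp_all
  then have left_inverse: "vcomp B T' T = id2 B g"
    unfolding T_def T'_def using vcomp_reassoc by simp
  have "T = vcomp B (vcomp B T' T) T" using left_inverse T by simp
  also have "\<dots> = vcomp B T' (vcomp B T T)" using T T' by simp
  also have "\<dots> = id2 B g" using idempotent left_inverse by simp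
  finally show ?thesis unfolding T_def .
qed

lemma adjunction_adjusted: "adjunction B f g w adjusted_counit"
  unfolding adjunction_def using triangle_left_adjusted triangle_right_adjusted
  by (simp add: hom1_iff hom2_iff)

end

lemma (in two_cat) has_left_adjoint_if_equivalence:
  assumes "equivalence1 B g"
  shows "has_left_adjoint B g"
proof -
  obtain f a b where f: "f \<in> hom1 B (tgt1 B g) (src1 B g)" and g: "g \<in> Arr B"
    and a: "a \<in> hom2 B (comp1 B f g) (id1 B (src1 B g))" "invertible2 B a"
    and b: "b \<in> hom2 B (comp1 B g f) (id1 B (tgt1 B g))" "invertible2 B b"
    using assms unfolding equivalence1_def by blast
  obtain a' where a': "a' \<in> hom2 B (id1 B (src1 B g)) (comp1 B f g)"
    "vcomp B a a' = id2 B (id1 B (src1 B g))" "vcomp B a' a = id2 B (comp1 B f g)"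
    using a unfolding invertible2_def hom2_def by auto
  obtain b' where b': "b' \<in> hom2 B (id1 B (tgt1 B g)) (comp1 B g f)"
    "vcomp B b b' = id2 B (id1 B (tgt1 B g))" "vcomp B b' b = id2 B (comp1 B g f)"
    using b unfolding invertible2_def hom2_def by auto
  interpret equivalence_data B f g b' b a a'
    using f g a(1) a' b(1) b' by unfold_locales (auto simp: hom1_iff)
  show ?thesis unfolding has_left_adjoint_def using adjunction_adjusted by blast
qed

context two_cat
begin

lemma whisker_right_cancel_equivalence:
  assumes "equivalence1 B e" "a \<in> hom2 B h h'" "a' \<in> hom2 B h h'" "src1 B h = tgt1 B e"
    "hcomp B a (id2 B e) = hcomp B a' (id2 B e)"
  shows "a = a'"
proof -
  obtain e' b b' where e': "e' \<in> Arr B" "src1 B e' = tgt1 B e" "tgt1 B e' = src1 B e"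
    and b: "b \<in> Cell B" "dom2 B b = comp1 B e e'" "cod2 B b = id1 B (tgt1 B e)"
    and b': "b' \<in> Cell B" "dom2 B b' = id1 B (tgt1 B e)" "cod2 B b' = comp1 B e e'"
    and bb': "vcomp B b b' = id2 B (id1 B (tgt1 B e))"
    using assms(1) unfolding equivalence1_def invertible2_def hom1_def hom2_def by auto
  have e: "e \<in> Arr B" using assms(1) unfolding equivalence1_def by blast
  have split: "x = vcomp B (hcomp B (id2 B h') b) (vcomp B (hcomp B (hcomp B x (id2 B e)) (id2 B e'))
      (hcomp B (id2 B h) b'))" if x: "x \<in> hom2 B h h'" for x
  proof -
    have x_arr: "x \<in> Cell B" "dom2 B x = h" "cod2 B x = h'" "h \<in> Arr B" "h' \<in> Arr B"
      "src1 B h' = src1 B h"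
      using x cell_simps[of x] by (auto simp: hom2_iff)
    have exchange: "vcomp B x (hcomp B (id2 B h) b) =
        vcomp B (hcomp B (id2 B h') b) (hcomp B x (id2 B (comp1 B e e')))"
      using whisker_exchange[of x b] x_arr b e e' assms(4) by simp
    have "vcomp B (hcomp B (id2 B h) b) (hcomp B (id2 B h) b') = id2 B h"
      using whisker_left_vcomp[of b b' h] bb' x_arr b b' e e' assms(4) by simp
    then have "x = vcomp B x (vcomp B (hcomp B (id2 B h) b) (hcomp B (id2 B h) b'))"
      using x_arr by simp
    also have "\<dots> = vcomp B (vcomp B (hcomp B (id2 B h') b) (hcomp B x (id2 B (comp1 B e e'))))
        (hcomp B (id2 B h) b')"
      by (rule vcomp_reassoc[OF exchange]) (use x_arr b b' e e' assms(4) in simp_all)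
    finally show ?thesis
      using x_arr b b' e e' assms(4) by simp
  qed
  show ?thesis using split[OF assms(2)] split[OF assms(3)] assms(5) by simp
qed

end

section \<open>Monadic 1-cells\<close>

locale monadic_data = two_cat +
  fixes p t \<gamma> m \<eta> L u \<mu> pL
  assumes kan: "right_kan B p t \<gamma>"
    and mult_hom: "m \<in> hom2 B (comp1 B t t) t"
    and mult_law: "vcomp B \<gamma> (hcomp B m (id2 B p)) = vcomp B \<gamma> (hcomp B (id2 B t) \<gamma>)"
    and unit_hom: "\<eta> \<in> hom2 B (id1 B (tgt1 B p)) t"
    and unit_law: "vcomp B \<gamma> (hcomp B \<eta> (id2 B p)) = id2 B p"
    and em: "em_object B (tgt1 B p) t m \<eta> L u \<mu>"
    and comparison: "pL \<in> hom1 B (src1 B p) L" "comp1 B u pL = p" "hcomp B \<mu> (id2 B pL) = \<gamma>"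
    and comparison_equivalence: "equivalence1 B pL"
begin

lemma data_simps[simp]: "p \<in> Arr B" "t \<in> Arr B" "src1 B t = tgt1 B p" "tgt1 B t = tgt1 B p"
  "\<gamma> \<in> Cell B" "dom2 B \<gamma> = comp1 B t p" "cod2 B \<gamma> = p"
  "m \<in> Cell B" "dom2 B m = comp1 B t t" "cod2 B m = t"
  "\<eta> \<in> Cell B" "dom2 B \<eta> = id1 B (tgt1 B p)" "cod2 B \<eta> = t"
  "L \<in> Obj B" "u \<in> Arr B" "src1 B u = L" "tgt1 B u = tgt1 B p"
  "\<mu> \<in> Cell B" "dom2 B \<mu> = comp1 B t u" "cod2 B \<mu> = u"
  "pL \<in> Arr B" "src1 B pL = src1 B p" "tgt1 B pL = L"
  using kan mult_hom unit_hom em comparison unfolding right_kan_def em_object_def hom1_def hom2_def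
  by auto

declare comparison(2,3)[simp] unit_law[simp] mult_law[simp]

lemmas comparison_reassoc[simp] = comp1_reassoc[OF comparison(2)] whisker_comp1_reassoc[OF comparison(2)]
  whisker_right_reassoc[OF comparison(3)]

lemmas monad_laws_reassoc[simp] = vcomp_reassoc[OF mult_law] vcomp_reassoc[OF unit_law]

lemma monad_unit_right: "vcomp B m (hcomp B (id2 B t) \<eta>) = id2 B t"
proof -
  have "hcomp B (id2 B t) (vcomp B \<gamma> (hcomp B \<eta> (id2 B p))) = id2 B (comp1 B t p)"
    by simp
  then have unit_whiskered:
    "vcomp B (hcomp B (id2 B t) \<gamma>) (hcomp B (hcomp B (id2 B t) \<eta>) (id2 B p)) = id2 B (comp1 B t p)"
    by (simp del: unit_law)
  show ?thesis
    by (rule right_kan_cell_unique[OF kan, of t]) (use unit_whiskered vcomp_reassoc[OF unit_whiskered] in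
      \<open>simp_all add: hom1_iff hom2_iff\<close>)
qed

lemma monad_unit_left: "vcomp B m (hcomp B \<eta> (id2 B t)) = id2 B t"
proof -
  have unit_natural: "vcomp B (hcomp B (id2 B t) \<gamma>) (hcomp B (hcomp B \<eta> (id2 B t)) (id2 B p)) =
      vcomp B (hcomp B \<eta> (id2 B p)) \<gamma>"
    using whisker_exchange[of \<eta> \<gamma>] by simp
  show ?thesis
    by (rule right_kan_cell_unique[OF kan, of t]) (use unit_natural vcomp_reassoc[OF unit_natural] in
      \<open>simp_all add: hom1_iff hom2_iff\<close>)
qed

lemma monad_assoc: "vcomp B m (hcomp B (id2 B t) m) = vcomp B m (hcomp B m (id2 B t))"
proof -
  have "hcomp B (id2 B t) (vcomp B \<gamma> (hcomp B m (id2 B p))) =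
      hcomp B (id2 B t) (vcomp B \<gamma> (hcomp B (id2 B t) \<gamma>))"
    by (simp only: mult_law)
  then have mult_whiskered: "vcomp B (hcomp B (id2 B t) \<gamma>) (hcomp B (hcomp B (id2 B t) m) (id2 B p)) =
      vcomp B (hcomp B (id2 B t) \<gamma>) (hcomp B (id2 B (comp1 B t t)) \<gamma>)"
    by (simp del: mult_law)
  have mult_natural: "vcomp B (hcomp B (id2 B t) \<gamma>) (hcomp B (hcomp B m (id2 B t)) (id2 B p)) =
      vcomp B (hcomp B m (id2 B p)) (hcomp B (id2 B (comp1 B t t)) \<gamma>)"
    using whisker_exchange[of m \<gamma>] by simp
  show ?thesis
    by (rule right_kan_cell_unique[OF kan, of "comp1 B (comp1 B t t) t"])
      (use mult_whiskered mult_natural vcomp_reassoc[OF mult_whiskered] vcomp_reassoc[OF mult_natural] in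
        \<open>simp_all add: hom1_iff hom2_iff\<close>)
qed

text \<open>(u, \<mu>) is itself a t-algebra: whiskering with the equivalence pL is faithful, and
  it turns the algebra laws for \<mu> into the laws for \<gamma>.\<close>

lemma action_assoc: "vcomp B \<mu> (hcomp B (id2 B t) \<mu>) = vcomp B \<mu> (hcomp B m (id2 B u))"
  by (rule whisker_right_cancel_equivalence[OF comparison_equivalence,
        where h = "comp1 B (comp1 B t t) u" and h' = u])
    (simp_all add: hom2_iff)

lemma action_unit: "vcomp B \<mu> (hcomp B \<eta> (id2 B u)) = id2 B u"
  by (rule whisker_right_cancel_equivalence[OF comparison_equivalence, where h = u and h' = u])
    (simp_all add: hom2_iff)

lemma u_has_left_adjoint: "has_left_adjoint B u"
proof -
  have "\<exists>!F. F \<in> hom1 B (tgt1 B p) L \<and> comp1 B u F = t \<and> hcomp B \<mu> (id2 B F) = m"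
    by (rule em_object_lift[OF em]) (simp_all add: hom1_iff hom2_iff monad_assoc monad_unit_left)
  then obtain F where F: "F \<in> Arr B" "src1 B F = tgt1 B p" "tgt1 B F = L"
    and F_eqs[simp]: "comp1 B u F = t" "hcomp B \<mu> (id2 B F) = m"
    unfolding hom1_iff by blast
  note [simp] = F comp1_reassoc[OF F_eqs(1)] whisker_comp1_reassoc[OF F_eqs(1)]
    whisker_right_reassoc[OF F_eqs(2)]
  have "\<exists>!\<epsilon>. \<epsilon> \<in> hom2 B (comp1 B F u) (id1 B L) \<and> hcomp B (id2 B u) \<epsilon> = \<mu>"
    by (rule em_object_lift_cell[OF em]) (simp_all add: hom1_iff hom2_iff action_assoc)
  then obtain \<epsilon> where \<epsilon>: "\<epsilon> \<in> Cell B" "dom2 B \<epsilon> = comp1 B F u" "cod2 B \<epsilon> = id1 B L"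
    and u_\<epsilon>[simp]: "hcomp B (id2 B u) \<epsilon> = \<mu>"
    unfolding hom2_iff by blast
  note [simp] = \<epsilon> whisker_left_reassoc[OF u_\<epsilon>]
  \<comment> \<open>u is faithful on 2-cells into F, and it maps the first triangle law to m \<cdot> t\<eta> = 1.\<close>
  have "\<exists>!\<zeta>. \<zeta> \<in> hom2 B F F \<and> hcomp B (id2 B u) \<zeta> = id2 B t"
    by (rule em_object_lift_cell[OF em]) (simp_all add: hom1_iff hom2_iff)
  moreover have "vcomp B (hcomp B \<epsilon> (id2 B F)) (hcomp B (id2 B F) \<eta>) \<in> hom2 B F F"
    "hcomp B (id2 B u) (vcomp B (hcomp B \<epsilon> (id2 B F)) (hcomp B (id2 B F) \<eta>)) = id2 B t"
    "id2 B F \<in> hom2 B F F" "hcomp B (id2 B u) (id2 B F) = id2 B t"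
    using monad_unit_right by (simp_all add: hom2_iff)
  ultimately have "vcomp B (hcomp B \<epsilon> (id2 B F)) (hcomp B (id2 B F) \<eta>) = id2 B F"
    by blast
  then have "adjunction B F u \<eta> \<epsilon>"
    unfolding adjunction_def using action_unit by (simp add: hom1_iff hom2_iff)
  then show ?thesis unfolding has_left_adjoint_def by blast
qed

lemma p_has_left_adjoint: "has_left_adjoint B p"
proof -
  obtain F \<eta>' \<epsilon>' where free: "adjunction B F u \<eta>' \<epsilon>'"
    using u_has_left_adjoint unfolding has_left_adjoint_def by blast
  obtain q w \<epsilon> where equivalence: "adjunction B q pL w \<epsilon>"
    using has_left_adjoint_if_equivalence[OF comparison_equivalence] unfolding has_left_adjoint_def by blast
  have "src1 B q = tgt1 B F"
    using free equivalence unfolding adjunction_def hom1_def by auto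
  from adjunction_comp[OF free equivalence this] show ?thesis
    unfolding has_left_adjoint_def comparison(2) by blast
qed

lemma p_effective_faithful:
  assumes "cokernel_diagram B p c d0 d1 \<alpha> P D0 D1 D2 s0"
  shows "effective_faithful B p"
proof -
  obtain F \<eta>' \<epsilon>' where "adjunction B F p \<eta>' \<epsilon>'"
    using p_has_left_adjoint unfolding has_left_adjoint_def by blast
  then interpret adjoint_pair B F p \<eta>' \<epsilon>' by unfold_locales
  obtain k where k: "k \<in> hom2 B d1 (comp1 B d0 t)" "vcomp B (hcomp B (id2 B d0) \<gamma>) (hcomp B k (id2 B p)) = \<alpha>"
    using assms mate_exists[OF kan, of d0 c d1 \<alpha>] unfolding cokernel_diagram_def opcomma_def by blast
  interpret descent_comparison B p c d0 d1 \<alpha> P D0 D1 D2 s0 t \<gamma> \<eta> m k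
    by unfold_locales (use assms kan mult_hom unit_hom k in simp_all)
  have "hcomp B (descent_cell u \<mu>) (id2 B pL) = \<alpha>"
    using descent_cell_whisker_right[of u \<mu> u pL] k(2) unfolding descent_cell_def by (simp add: hom2_iff)
  then show ?thesis
    unfolding effective_faithful_def
    using assms lax_descent_if_em_object[OF em] comparison comparison_equivalence by blast
qed

end

lemma (in two_cat) monadic_iff_left_adjoint_effective_faithful:
  assumes "has_cokernel_diagram B p"
  shows "monadic B p \<longleftrightarrow> has_left_adjoint B p \<and> effective_faithful B p"
proof
  assume "monadic B p"
  then obtain t \<gamma> m \<eta> L u \<mu> pL where "monadic_data B p t \<gamma> m \<eta> L u \<mu> pL"
    unfolding monadic_def monadic_data_def monadic_data_axioms_def using two_cat_axioms by blast
  then interpret monadic_data B p t \<gamma> m \<eta> L u \<mu> pL .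
  show "has_left_adjoint B p \<and> effective_faithful B p"
    using p_has_left_adjoint p_effective_faithful assms unfolding has_cokernel_diagram_def by blast
next
  assume "has_left_adjoint B p \<and> effective_faithful B p"
  then obtain f \<eta> \<epsilon> where "adjunction B f p \<eta> \<epsilon>" and "effective_faithful B p"
    unfolding has_left_adjoint_def by blast
  then interpret adjoint_pair B f p \<eta> \<epsilon> by unfold_locales
  show "monadic B p" by (rule monadic_if_effective_faithful) fact
qed

section \<open>Duality\<close>

definition co2 :: "('o,'a,'c) twocat \<Rightarrow> ('o,'a,'c) twocat" where
  "co2 B = B\<lparr>dom2 := cod2 B, cod2 := dom2 B, vcomp := (\<lambda>a b. vcomp B b a)\<rparr>"

lemma co2_simps[simp]: "Obj (co2 B) = Obj B" "Arr (co2 B) = Arr B" "src1 (co2 B) = src1 B" "tgt1 (co2 B) = tgt1 B"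
  "comp1 (co2 B) = comp1 B" "id1 (co2 B) = id1 B" "Cell (co2 B) = Cell B" "dom2 (co2 B) = cod2 B"
  "cod2 (co2 B) = dom2 B" "vcomp (co2 B) a b = vcomp B b a" "hcomp (co2 B) = hcomp B" "id2 (co2 B) = id2 B"
  unfolding co2_def by simp_all

lemma op2_simps[simp]: "Obj (op2 B) = Obj B" "Arr (op2 B) = Arr B" "src1 (op2 B) = tgt1 B" "tgt1 (op2 B) = src1 B"
  "comp1 (op2 B) g f = comp1 B f g" "id1 (op2 B) = id1 B" "Cell (op2 B) = Cell B" "dom2 (op2 B) = dom2 B"
  "cod2 (op2 B) = cod2 B" "vcomp (op2 B) = vcomp B" "hcomp (op2 B) a b = hcomp B b a" "id2 (op2 B) = id2 B"
  unfolding op2_def by simp_all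

lemma coop2_eq_co2_op2: "coop2 A = co2 (op2 A)"
  unfolding coop2_def co2_def op2_def by simp

lemma hom1_co2[simp]: "hom1 (co2 B) x y = hom1 B x y" unfolding hom1_def by simp
lemma hom2_co2[simp]: "hom2 (co2 B) f g = hom2 B g f" unfolding hom2_def by auto
lemma hom1_op2[simp]: "hom1 (op2 B) x y = hom1 B y x" unfolding hom1_def by auto
lemma hom2_op2[simp]: "hom2 (op2 B) f g = hom2 B f g" unfolding hom2_def by simp

lemma co2_co2[simp]: "co2 (co2 B) = B" unfolding co2_def by simp

lemma two_category_co2: "two_category B \<Longrightarrow> two_category (co2 B)"
  unfolding two_category_def by (simp add: hom2_def) (smt (verit))

lemma two_category_op2: "two_category B \<Longrightarrow> two_category (op2 B)"
  unfolding two_category_def by (simp add: hom1_def hom2_def) (smt (verit))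

lemma opcomma_co2:
  assumes opcomma: "opcomma B p c d0 d1 \<alpha>"
  shows "opcomma (co2 B) p c d1 d0 \<alpha>"
  unfolding opcomma_def
proof (simp only: co2_simps hom1_co2 hom2_co2, intro conjI ballI impI)
  show "p \<in> Arr B" "c \<in> Obj B" "d1 \<in> hom1 B (tgt1 B p) c" "d0 \<in> hom1 B (tgt1 B p) c"
    "\<alpha> \<in> hom2 B (comp1 B d1 p) (comp1 B d0 p)"
    using opcomma unfolding opcomma_def by auto
next
  fix y h0 h1 \<beta> assume "y \<in> Obj B" "h0 \<in> hom1 B (tgt1 B p) y" "h1 \<in> hom1 B (tgt1 B p) y"
    "\<beta> \<in> hom2 B (comp1 B h0 p) (comp1 B h1 p)"
  from opcomma_factor[OF opcomma this(1,3,2,4)]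
  show "\<exists>!h. h \<in> hom1 B c y \<and> comp1 B h d1 = h0 \<and> comp1 B h d0 = h1 \<and> hcomp B (id2 B h) \<alpha> = \<beta>"
    by (simp add: conj_ac)
next
  fix y h h' \<xi>0 \<xi>1 assume "y \<in> Obj B" "h \<in> hom1 B c y" "h' \<in> hom1 B c y"
    "\<xi>0 \<in> hom2 B (comp1 B h' d1) (comp1 B h d1)" "\<xi>1 \<in> hom2 B (comp1 B h' d0) (comp1 B h d0)"
    "vcomp B (hcomp B (id2 B h) \<alpha>) (hcomp B \<xi>0 (id2 B p)) =
     vcomp B (hcomp B \<xi>1 (id2 B p)) (hcomp B (id2 B h') \<alpha>)"
  from opcomma_factor_cell[OF opcomma this(1,3,2,5,4) this(6)[symmetric]]
  show "\<exists>!\<xi>. \<xi> \<in> hom2 B h' h \<and> hcomp B \<xi> (id2 B d1) = \<xi>0 \<and> hcomp B \<xi> (id2 B d0) = \<xi>1"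
    by (simp add: conj_ac)
qed

lemma pushout2_co2:
  assumes pushout: "pushout2 B f0 f1 P q0 q1"
  shows "pushout2 (co2 B) f1 f0 P q1 q0"
  unfolding pushout2_def
proof (simp only: co2_simps hom1_co2 hom2_co2, intro conjI ballI impI)
  show "f1 \<in> Arr B" "f0 \<in> Arr B" "src1 B f1 = src1 B f0" "P \<in> Obj B" "q1 \<in> hom1 B (tgt1 B f1) P"
    "q0 \<in> hom1 B (tgt1 B f0) P" "comp1 B q1 f1 = comp1 B q0 f0"
    using pushout unfolding pushout2_def by auto
next
  fix y k0 k1 assume "y \<in> Obj B" "k0 \<in> hom1 B (tgt1 B f1) y" "k1 \<in> hom1 B (tgt1 B f0) y"
    "comp1 B k0 f1 = comp1 B k1 f0"
  from pushout2_factor[OF pushout this(1,3,2) this(4)[symmetric]]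
  show "\<exists>!k. k \<in> hom1 B P y \<and> comp1 B k q1 = k0 \<and> comp1 B k q0 = k1"
    by (simp add: conj_ac)
next
  fix y k k' \<xi>0 \<xi>1 assume "y \<in> Obj B" "k \<in> hom1 B P y" "k' \<in> hom1 B P y"
    "\<xi>0 \<in> hom2 B (comp1 B k' q1) (comp1 B k q1)" "\<xi>1 \<in> hom2 B (comp1 B k' q0) (comp1 B k q0)"
    "hcomp B \<xi>0 (id2 B f1) = hcomp B \<xi>1 (id2 B f0)"
  from pushout2_factor_cell[OF pushout this(1,3,2,5,4) this(6)[symmetric]]
  show "\<exists>!\<xi>. \<xi> \<in> hom2 B k' k \<and> hcomp B \<xi> (id2 B q1) = \<xi>0 \<and> hcomp B \<xi> (id2 B q0) = \<xi>1"
    by (simp add: conj_ac)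
qed

lemma cokernel_diagram_co2:
  assumes "cokernel_diagram B p c d0 d1 \<alpha> P D0 D1 D2 s0"
  shows "cokernel_diagram (co2 B) p c d1 d0 \<alpha> P D2 D1 D0 s0"
  using assms opcomma_co2[of B p c d0 d1 \<alpha>] pushout2_co2[of B d0 d1 P D2 D0] unfolding cokernel_diagram_def by auto

lemma has_cokernel_diagram_co2: "has_cokernel_diagram B p \<Longrightarrow> has_cokernel_diagram (co2 B) p"
proof -
  assume "has_cokernel_diagram B p"
  then obtain c d0 d1 \<alpha> P D0 D1 D2 s0 where "cokernel_diagram B p c d0 d1 \<alpha> P D0 D1 D2 s0"
    unfolding has_cokernel_diagram_def by blast
  from cokernel_diagram_co2[OF this] show ?thesis unfolding has_cokernel_diagram_def by blast
qed

lemma desc_datum_co2: "desc_datum (co2 B) d1 d0 D2 D1 D0 s0 h \<beta> \<longleftrightarrow> desc_datum B d0 d1 D0 D1 D2 s0 h \<beta>"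
  unfolding desc_datum_def by auto

lemma lax_descent_co2:
  assumes descent: "lax_descent B p d0 d1 D0 D1 D2 s0 L d \<Psi>"
  shows "lax_descent (co2 B) p d1 d0 D2 D1 D0 s0 L d \<Psi>"
  unfolding lax_descent_def
proof (simp only: co2_simps hom1_co2 hom2_co2 desc_datum_co2, intro conjI ballI impI allI)
  show "L \<in> Obj B" "d \<in> hom1 B L (tgt1 B p)" "\<Psi> \<in> hom2 B (comp1 B d1 d) (comp1 B d0 d)"
    using descent unfolding lax_descent_def by auto
next
  fix y h \<beta> assume "y \<in> Obj B" "h \<in> hom1 B y (tgt1 B p)" "desc_datum B d0 d1 D0 D1 D2 s0 h \<beta>"
  from lax_descent_lift[OF descent this]
  show "\<exists>!g. g \<in> hom1 B y L \<and> comp1 B d g = h \<and> hcomp B \<Psi> (id2 B g) = \<beta>" .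
next
  fix y g g' \<xi> assume "y \<in> Obj B" "g \<in> hom1 B y L" "g' \<in> hom1 B y L" "\<xi> \<in> hom2 B (comp1 B d g') (comp1 B d g)"
    "vcomp B (hcomp B (id2 B d0) \<xi>) (hcomp B \<Psi> (id2 B g')) =
     vcomp B (hcomp B \<Psi> (id2 B g)) (hcomp B (id2 B d1) \<xi>)"
  from lax_descent_lift_cell[OF descent this(1,3,2,4) this(5)[symmetric]]
  show "\<exists>!\<zeta>. \<zeta> \<in> hom2 B g' g \<and> hcomp B (id2 B d) \<zeta> = \<xi>" .
qed

lemma invertible2_co2: "invertible2 (co2 B) a \<longleftrightarrow> invertible2 B a"
  unfolding invertible2_def by auto

lemma invertible2_inverse:
  assumes "invertible2 B a"
  obtains a' where "a' \<in> hom2 B (cod2 B a) (dom2 B a)" "invertible2 B a'"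
proof -
  obtain a' where a': "a' \<in> hom2 B (cod2 B a) (dom2 B a)" "vcomp B a a' = id2 B (cod2 B a)" "vcomp B a' a = id2 B (dom2 B a)"
    using assms unfolding invertible2_def by blast
  have "invertible2 B a'" unfolding invertible2_def
    using a' assms unfolding invertible2_def hom2_def by auto
  then show ?thesis using a' that by blast
qed

lemma equivalence1_co2:
  assumes "equivalence1 B f"
  shows "equivalence1 (co2 B) f"
proof -
  obtain g a b where g: "f \<in> Arr B" "g \<in> hom1 B (tgt1 B f) (src1 B f)"
    and a: "a \<in> hom2 B (comp1 B g f) (id1 B (src1 B f))" "invertible2 B a"
    and b: "b \<in> hom2 B (comp1 B f g) (id1 B (tgt1 B f))" "invertible2 B b"
    using assms unfolding equivalence1_def by blast
  obtain a' where a': "a' \<in> hom2 B (cod2 B a) (dom2 B a)" "invertible2 B a'" using invertible2_inverse[OF a(2)] by blast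
  obtain b' where b': "b' \<in> hom2 B (cod2 B b) (dom2 B b)" "invertible2 B b'" using invertible2_inverse[OF b(2)] by blast
  have "a' \<in> hom2 B (id1 B (src1 B f)) (comp1 B g f)" "b' \<in> hom2 B (id1 B (tgt1 B f)) (comp1 B f g)"
    using a(1) b(1) a'(1) b'(1) unfolding hom2_def by auto
  then show ?thesis unfolding equivalence1_def using g a' b' by (auto simp: invertible2_co2)
qed

lemma effective_faithful_co2:
  assumes "effective_faithful B p"
  shows "effective_faithful (co2 B) p"
proof -
  obtain c d0 d1 \<alpha> P D0 D1 D2 s0 L d \<Psi> pH where
    e: "cokernel_diagram B p c d0 d1 \<alpha> P D0 D1 D2 s0" "lax_descent B p d0 d1 D0 D1 D2 s0 L d \<Psi>"
       "pH \<in> hom1 B (src1 B p) L" "comp1 B d pH = p" "hcomp B \<Psi> (id2 B pH) = \<alpha>" "equivalence1 B pH"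
    using assms unfolding effective_faithful_def by blast
  have "cokernel_diagram (co2 B) p c d1 d0 \<alpha> P D2 D1 D0 s0 \<and> lax_descent (co2 B) p d1 d0 D2 D1 D0 s0 L d \<Psi> \<and>
        pH \<in> hom1 (co2 B) (src1 (co2 B) p) L \<and> comp1 (co2 B) d pH = p \<and> hcomp (co2 B) \<Psi> (id2 (co2 B) pH) = \<alpha> \<and>
        equivalence1 (co2 B) pH"
    using cokernel_diagram_co2[OF e(1)] lax_descent_co2[OF e(2)] e(3-5) equivalence1_co2[OF e(6)] by simp
  then show ?thesis unfolding effective_faithful_def by blast
qed

lemma effective_faithful_co2_iff: "effective_faithful (co2 B) p \<longleftrightarrow> effective_faithful B p"
  using effective_faithful_co2[of B p] effective_faithful_co2[of "co2 B" p] by auto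

lemma adjunction_co2_op2: "adjunction (co2 (op2 A)) f g \<eta> \<epsilon> \<longleftrightarrow> adjunction A f g \<epsilon> \<eta>"
  unfolding adjunction_def by (simp add: conj_ac)

lemma adjunction_op2: "adjunction (op2 A) f g \<eta> \<epsilon> \<longleftrightarrow> adjunction A g f \<eta> \<epsilon>"
  unfolding adjunction_def hom1_def by (auto simp: conj_ac)

lemma has_left_adjoint_co2_op2: "has_left_adjoint (co2 (op2 A)) l \<longleftrightarrow> has_left_adjoint A l"
  unfolding has_left_adjoint_def adjunction_co2_op2 by blast

lemma has_left_adjoint_op2: "has_left_adjoint (op2 A) l \<longleftrightarrow> has_right_adjoint A l"
  unfolding has_left_adjoint_def has_right_adjoint_def adjunction_op2 by blast

theorem corollary5p12:
  fixes A :: "('o, 'a, 'c) twocat" and l :: 'a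
  assumes "two_category A"
    and "l \<in> Arr A"
    and "has_kernel_diagram A l"
  shows "(cokleisli_morphism A l \<longleftrightarrow> has_left_adjoint A l \<and> effective_op_faithful A l) \<and>
         (kleisli_morphism A l \<longleftrightarrow> has_right_adjoint A l \<and> effective_op_faithful A l)"
proof -
  interpret op: two_cat "op2 A"
    using two_category_op2[OF assms(1)] by (simp add: two_cat_iff_two_category)
  interpret coop: two_cat "co2 (op2 A)"
    using two_category_co2[OF two_category_op2[OF assms(1)]] by (simp add: two_cat_iff_two_category)
  have kernel: "has_cokernel_diagram (op2 A) l"
    using assms(3) unfolding has_kernel_diagram_def .
  show ?thesis
    unfolding cokleisli_morphism_def kleisli_morphism_def effective_op_faithful_def coop2_eq_co2_op2
      coop.monadic_iff_left_adjoint_effective_faithful[OF has_cokernel_diagram_co2[OF kernel]]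
      op.monadic_iff_left_adjoint_effective_faithful[OF kernel]
      has_left_adjoint_co2_op2 has_left_adjoint_op2 effective_faithful_co2_iff
    by (rule conjI; rule refl)
qed

end
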